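(* Let $\gamma=\{t_0<t_1<\dots<t_k\}\subset\mathbb{Z}_+$ be a finite nonempty set ($k\ge 0$), and define $G_\gamma(\bar\eta):=\mathcal E\big[\Psi_\gamma(\widehat\zeta)\,\big|\,\eta_{t_0}=\bar\eta\big]$, $\bar\eta\in\Omega$ (the conditional expectation of $\Psi_\gamma$ given $\mathfrak M_{t_0}$, viewed as a function of $\eta_{t_0}$). Then $G_\gamma\in\mathcal H_M$ and $$\|G_\gamma\|_M\le M^{|\gamma|}\,\bar\mu^{\lfloor |\gamma|/2\rfloor}\,(1+2\bar\mu)^{\lfloor (|\gamma|-1)/2\rfloor}\le C\,\mu_*^{|\gamma|},$$ where $\lfloor\cdot\rfloor$ is the integer part and $C>0$ is a constant independent of $\gamma$.
   Context: Model. Fix $d\ge1$. $(X_t,\xi_t)_{t\in\mathbb{Z}_+}$ is a Markov chain with $X_t\in\mathbb{Z}^d$, $X_0=0$, $\xi_t\in\Omega:=\{-1,+1\}^{\mathbb{Z}^d}$. Given $X_t=x,\xi_t=\bar\xi$, the next position and the next environment are conditionally independent; $P(X_{t+1}=x+u\mid X_t=x,\xi_t=\bar\xi)=P_0(u)+\epsilon c(u)\bar\xi(x)$, where $\epsilon>0$, $P_0$ is an even, finite-range probability distribution on $\mathbb{Z}^d$ with $|\sum_u P_0(u)e^{i(\lambda,u)}|=1$ iff $\lambda=0$ and such that $1/\tilde p_0(\lambda)$ (with $\tilde p_0(\lambda)=\sum_u P_0(u)e^{i(\lambda,u)}$) has absolutely summable Fourier coefficients, and $c$ is an odd finite-range real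 function with $P_0(u)\pm\epsilon c(u)\in[0,1)$. Given $X_t=x,\xi_t=\bar\xi$, the values $\xi_{t+1}(y)$, $y\in\mathbb{Z}^d$, are independent with $P(\xi_{t+1}(y)=s)=Q_0(\bar\xi(y),s)$ if $y\ne x$ and $Q_1(\bar\xi(y),s)$ if $y=x$, where $Q_0,Q_1$ are symmetric $2\times2$ stochastic matrices, $Q_0$ has eigenvalues $1,\mu$ with $0<|\mu|<1$, and $Q_1-Q_0=O(\epsilon)$. The environment seen from the walk, $\eta_t(x)=\xi_t(X_t+x)$, is a Markov chain on $\Omega$ with stochastic operator $(\mathcal T f)(\bar\eta)=\mathcal E[f(\eta_{t+1})\mid\eta_t=\bar\eta]$. $\Pi_0$ is the product of uniform measures on $\{\pm1\}$. For finite $\Gamma\subset\mathbb{Z}^d$ let $\Phi_\Gamma(\eta)=\prod_{x\in\Gamma}\eta(x)$, $\Phi_\emptyset=1$; each $f\in L^2(\Omega,\Pi_0)$ is written $f=\sum_\Gamma f_\Gamma\Phi_\Gamma$. For a fixed $M>1$, $\mathcal H_M=\{f:\|f\|_M:=\sum_\Gamma|f_\Gamma|M^{|\Gamma|}<\infty\}$. Standing assumptions (valid for $\epsilon,|\mu|$ small): $\mathcal T$ maps $\mathcal H_M$ into itself; the chain $(\eta_t)$ has an invariant probability measure $\Pi$, absolutely continuous w.r.t. $\Pi_0$ with bounded density; there is $\bar\mu\in(0,1)$ with $\|\mathcal T f\|_M\le\bar\mu\|f\|_M$ for all $f\in\widehat{\mathcal H}_M:=\{f\in\mathcal H_M:\int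 f\,d\Pi=0\}$. The dynamics and $\Pi$ are invariant under the global spin flip $\eta\mapsto-\eta$. Path space notation: $\widehat\Omega=\{\pm1\}^{\mathbb{Z}^d\times\mathbb{Z}_+}$; $\mathcal P_\Pi$ is the law of $(\eta_t)_{t\ge0}$ with $\eta_0\sim\Pi$; $\mathfrak M_{t_0}^{t_1}$ is the $\sigma$-algebra generated by $\eta_{t_0},\dots,\eta_{t_1}$, $\mathfrak M_t=\mathfrak M_t^t$. $\zeta_t:=\eta_t(0)$, $\widehat\zeta=(\zeta_t)_{t\ge0}\in\Omega_+:=\{\pm1\}^{\mathbb{Z}_+}$. Walsh functions: $\Psi_\gamma(\widehat\zeta)=\prod_{t\in\gamma}\zeta_t$ for finite $\gamma\subset\mathbb{Z}_+$, $\Psi_\emptyset=1$. $\mu_*:=M\sqrt{\bar\mu(1+2\bar\mu)}$. *)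

theory Defs
  imports "HOL-Probability.Probability"
begin

text \<open>Configurations: \<Omega> = functions Z^d \<Rightarrow> {-1,+1}, modelled as real-valued functions
  on the lattice int^'d (dimension d = CARD('d)).\<close>

type_synonym 'd config = "(int ^ 'd) \<Rightarrow> real"

definition Pi0 :: "'d::finite config measure" where
  "Pi0 = PiM UNIV (\<lambda>_. measure_pmf (pmf_of_set {-1::real, 1}))"

definition Phi :: "(int ^ 'd) set \<Rightarrow> 'd::finite config \<Rightarrow> real" where
  "Phi G eta = (\<Prod>x\<in>G. eta x)"

definition walsh_coef :: "('d::finite config \<Rightarrow> real) \<Rightarrow> (int ^ 'd) set \<Rightarrow> real" where
  "walsh_coef f G = (\<integral>eta. f eta * Phi G eta \<partial>Pi0)"

definition L2Pi0 :: "('d::finite config \<Rightarrow> real) set" where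
  "L2Pi0 = {f. f \<in> borel_measurable Pi0 \<and> integrable Pi0 (\<lambda>eta. (f eta)^2)}"

definition HM :: "real \<Rightarrow> ('d::finite config \<Rightarrow> real) set" where
  "HM M = {f. f \<in> L2Pi0 \<and>
      (\<lambda>G. \<bar>walsh_coef f G\<bar> * M ^ card G) summable_on {G. finite G}}"

definition normM :: "real \<Rightarrow> ('d::finite config \<Rightarrow> real) \<Rightarrow> real" where
  "normM M f = (\<Sum>\<^sub>\<infinity>G\<in>{G. finite G}. \<bar>walsh_coef f G\<bar> * M ^ card G)"

text \<open>Law of a single spin after one step: stays equal to a with probability 1-q,
  flips with probability q (symmetric 2x2 stochastic matrix with off-diagonal q).\<close>
definition spin_step :: "real \<Rightarrow> real \<Rightarrow> real pmf" where
  "spin_step q a = map_pmf (\<lambda>b. if b then - a else a) (bernoulli_pmf q)"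

text \<open>Joint law of the updated environment, in the frame of the walker before its step:
  independent spins, Q_1 at the walker's site 0 and Q_0 elsewhere.\<close>
definition env_step :: "real \<Rightarrow> real \<Rightarrow> 'd::finite config \<Rightarrow> 'd config measure" where
  "env_step q0 q1 eta =
     PiM UNIV (\<lambda>y. measure_pmf (spin_step (if y = 0 then q1 else q0) (eta y)))"

text \<open>Stochastic operator of the environment seen from the walk:
  (T f)(eta) = E[f(eta_{t+1}) | eta_t = eta]. The walker jumps by u with probability
  P0 u + eps * c u * eta 0, independently of the environment update, and
  eta_{t+1}(x) = xi_{t+1}(X_t + u + x).  S is a finite set containing the supports of P0, c.\<close>
definition Top :: "(int ^ 'd) set \<Rightarrow> ((int ^ 'd) \<Rightarrow> real) \<Rightarrow> ((int ^ 'd) \<Rightarrow> real) \<Rightarrow> real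
    \<Rightarrow> real \<Rightarrow> real \<Rightarrow> ('d::finite config \<Rightarrow> real) \<Rightarrow> 'd config \<Rightarrow> real" where
  "Top S P0 c eps q0 q1 f eta =
     (\<Sum>u\<in>S. (P0 u + eps * c u * eta 0) *
        (\<integral>xi. f (\<lambda>x. xi (u + x)) \<partial>env_step q0 q1 eta))"

text \<open>Finite-dimensional expectations of the Markov chain with one-step operator T:
  chain_exp T n F eta = E[F([eta_0, ..., eta_n]) | eta_0 = eta].\<close>
fun chain_exp :: "(('a \<Rightarrow> real) \<Rightarrow> 'a \<Rightarrow> real) \<Rightarrow> nat \<Rightarrow> ('a list \<Rightarrow> real) \<Rightarrow> 'a \<Rightarrow> real" where
  "chain_exp T 0 F eta = F [eta]"
| "chain_exp T (Suc n) F eta = T (\<lambda>eta'. chain_exp T n (\<lambda>xs. F (eta # xs)) eta') eta"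

text \<open>G_gamma(eta) = E[Psi_gamma | eta_{t_0} = eta]; by time-homogeneity this is the
  expectation of prod_{t in gamma} zeta_{t - t_0} for the chain started at eta.\<close>
definition G_gamma :: "(('d::finite config \<Rightarrow> real) \<Rightarrow> 'd config \<Rightarrow> real) \<Rightarrow> nat set
    \<Rightarrow> 'd config \<Rightarrow> real" where
  "G_gamma T gam eta =
     chain_exp T (Max gam - Min gam) (\<lambda>xs. \<Prod>t\<in>gam. (xs ! (t - Min gam)) 0) eta"

definition ip :: "real ^ 'd \<Rightarrow> int ^ 'd \<Rightarrow> real" where
  "ip l u = (\<Sum>i\<in>UNIV. l $ i * real_of_int (u $ i))"

definition p_tilde :: "((int ^ 'd::finite) \<Rightarrow> real) \<Rightarrow> real ^ 'd \<Rightarrow> complex" where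
  "p_tilde P0 l = (\<Sum>u\<in>{u. P0 u \<noteq> 0}. complex_of_real (P0 u) * cis (ip l u))"

definition inv_p_fourier :: "((int ^ 'd::finite) \<Rightarrow> real) \<Rightarrow> int ^ 'd \<Rightarrow> complex" where
  "inv_p_fourier P0 x =
     complex_of_real (1 / (2 * pi) ^ CARD('d)) *
     integral (cbox (\<chi> i. - pi) (\<chi> i. pi)) (\<lambda>l. cis (- ip l x) / p_tilde P0 l)"

end

theory Submission
  imports Defs
begin

text \<open>
  \<open>G\<^sub>\<gamma>\<close> is computed by peeling off the first time of \<open>\<gamma>\<close>: every time step applies \<open>T\<close>, and every
  time in \<open>\<gamma>\<close> multiplies by the spin \<open>\<eta>(0)\<close>, which costs a factor \<open>M\<close> in the norm of \<open>H\<^sub>M\<close>.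
  The global spin flip combined with the reflection \<open>x \<mapsto> -x\<close> commutes with \<open>T\<close>, so a function
  built from an odd number of spins is odd. Odd functions have \<open>\<Pi>\<close>-mean zero, hence \<open>T\<close> contracts
  them by the factor \<open>mubar\<close>. For an even number of spins the mean \<open>a\<close> of \<open>V\<close> need not vanish,
  but \<open>\<bar>a\<bar> \<le> \<parallel>V\<parallel>\<^sub>M\<close> and \<open>T\<close> contracts \<open>V - a\<close>, so \<open>\<parallel>T V\<parallel>\<^sub>M \<le> (1 + 2 mubar) \<parallel>V\<parallel>\<^sub>M\<close>; further steps
  without spins do not increase these bounds. Alternating the two cases yields the factors
  \<open>mubar\<close> and \<open>1 + 2 mubar\<close> in turn, and the geometric bound follows by comparing exponents.
\<close>

section \<open>Walsh analysis on the product measure\<close>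

abbreviation uniform_spin :: "real measure" where
  "uniform_spin \<equiv> measure_pmf (pmf_of_set {-1::real, 1})"

text \<open>Configurations are real-valued, so \<open>\<Pi>\<^sub>0\<close>-a.e. statements are restricted to genuine spin
  configurations.\<close>

definition spin_configs :: "'d::finite config set" where
  "spin_configs = {eta. \<forall>x. eta x = 1 \<or> eta x = -1}"

interpretation Pi0_product: product_prob_space "\<lambda>_::int^'d::finite. uniform_spin" UNIV
  by unfold_locales

lemma prob_space_Pi0: "prob_space (Pi0 :: 'd::finite config measure)"
  unfolding Pi0_def by (rule Pi0_product.P.prob_space_axioms)

lemma finite_measure_Pi0: "finite_measure (Pi0 :: 'd::finite config measure)"
  unfolding Pi0_def by (rule Pi0_product.P.finite_measure_axioms)

lemma space_Pi0[simp]: "space (Pi0 :: 'd::finite config measure) = UNIV"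
  unfolding Pi0_def by (simp add: space_PiM)

lemma measure_Pi0_UNIV: "measure (Pi0::'d::finite config measure) UNIV = 1"
  using prob_space.prob_space[OF prob_space_Pi0] by simp

lemma set_pmf_uniform_spin: "set_pmf (pmf_of_set {-1::real, 1}) = {-1,1}"
  by (simp add: set_pmf_of_set)

lemma AE_spin_configs: "AE eta in (Pi0 :: 'd::finite config measure). eta \<in> spin_configs"
proof -
  have "AE eta in Pi0. eta x = 1 \<or> eta x = -1" for x :: "int^'d"
  proof -
    have "AE y in uniform_spin. y = 1 \<or> y = -1"
      by (rule AE_pmfI) (auto simp: set_pmf_uniform_spin)
    then show ?thesis
      unfolding Pi0_def by (rule Pi0_product.AE_component[rotated]) simp
  qed
  then have "AE eta in (Pi0 :: 'd config measure). \<forall>x. eta x = 1 \<or> eta x = -1"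
    by (subst AE_all_countable) auto
  then show ?thesis by (simp add: spin_configs_def)
qed

lemma integral_uniform_spin: "(\<integral>y. f y \<partial>uniform_spin) = ((f 1 + f (-1)) / 2 :: real)"
  by (subst integral_pmf_of_set) (auto simp: add.commute)

lemma integrable_uniform_spin: "integrable uniform_spin (f :: real \<Rightarrow> real)"
  by (rule integrable_measure_pmf_finite) (simp add: set_pmf_uniform_spin)

lemma borel_measurable_spin[measurable]:
  "(\<lambda>eta. g (eta x) :: real) \<in> borel_measurable (Pi0 :: 'd::finite config measure)"
  unfolding Pi0_def
  by (rule measurable_compose[OF measurable_component_singleton])
    (simp_all add: measurable_count_space_eq1)

lemma integral_Pi0_prod:
  fixes h :: "int^'d::finite \<Rightarrow> real \<Rightarrow> real"
  assumes J: "finite J"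
  shows "(\<integral>eta. (\<Prod>x\<in>J. h x (eta x)) \<partial>(Pi0::'d config measure)) = (\<Prod>x\<in>J. \<integral>y. h x y \<partial>uniform_spin)"
proof -
  let ?PJ = "PiM J (\<lambda>_. uniform_spin)"
  have distr_restrict: "distr (Pi0::'d config measure) ?PJ (\<lambda>eta. restrict eta J) = ?PJ"
    unfolding Pi0_def using J by (intro Pi0_product.distr_PiM_restrict_finite) auto
  have meas: "(\<lambda>\<omega>. \<Prod>x\<in>J. h x (\<omega> x)) \<in> borel_measurable ?PJ"
    by (intro borel_measurable_prod, rule measurable_compose[OF measurable_component_singleton])
      (simp_all add: measurable_count_space_eq1)
  have "(\<integral>eta. (\<Prod>x\<in>J. h x (eta x)) \<partial>(Pi0::'d config measure)) =
      (\<integral>eta. (\<Prod>x\<in>J. h x (restrict eta J x)) \<partial>(Pi0::'d config measure))"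
    by (intro Bochner_Integration.integral_cong) auto
  also have "\<dots> = (\<integral>\<omega>. (\<Prod>x\<in>J. h x (\<omega> x)) \<partial>(distr (Pi0::'d config measure) ?PJ (\<lambda>eta. restrict eta J)))"
    unfolding Pi0_def by (rule integral_distr[symmetric], rule measurable_restrict_subset, simp, rule meas)
  also have "\<dots> = (\<Prod>x\<in>J. \<integral>y. h x y \<partial>uniform_spin)"
    unfolding distr_restrict
    by (rule product_sigma_finite.product_integral_prod)
      (auto intro: J integrable_uniform_spin simp: product_sigma_finite_def
        prob_space_imp_sigma_finite prob_space_measure_pmf)
  finally show ?thesis .
qed

lemma borel_measurable_Phi[measurable]: "Phi G \<in> borel_measurable (Pi0 :: 'd::finite config measure)"
  unfolding Phi_def by (intro borel_measurable_prod borel_measurable_spin)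

lemma spin_configs_square: "eta \<in> spin_configs \<Longrightarrow> eta x * eta x = 1"
  unfolding spin_configs_def by (cases "eta x = 1") auto

lemma spin_configs_abs: "eta \<in> spin_configs \<Longrightarrow> \<bar>eta x\<bar> = 1"
  unfolding spin_configs_def by (cases "eta x = 1") auto

lemma Phi_abs: "eta \<in> spin_configs \<Longrightarrow> \<bar>Phi G eta\<bar> = 1"
  unfolding Phi_def by (simp add: abs_prod spin_configs_abs)

lemma Phi_mult_Phi:
  assumes "finite G" "finite H" "eta \<in> spin_configs"
  shows "Phi G eta * Phi H eta = Phi (sym_diff G H) eta"
proof -
  have G: "G = (G - H) \<union> (G \<inter> H)" and H: "H = (H - G) \<union> (G \<inter> H)" by auto
  have PG: "Phi G eta = (\<Prod>x\<in>G-H. eta x) * (\<Prod>x\<in>G\<inter>H. eta x)"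
    unfolding Phi_def using assms by (subst G) (rule prod.union_disjoint, auto)
  have PH: "Phi H eta = (\<Prod>x\<in>H-G. eta x) * (\<Prod>x\<in>G\<inter>H. eta x)"
    unfolding Phi_def using assms by (subst H) (rule prod.union_disjoint, auto)
  have PS: "Phi (sym_diff G H) eta = (\<Prod>x\<in>G-H. eta x) * (\<Prod>x\<in>H-G. eta x)"
    unfolding Phi_def using assms by (subst prod.union_disjoint) auto
  have "(\<Prod>x\<in>G\<inter>H. eta x) * (\<Prod>x\<in>G\<inter>H. eta x) = 1"
    using assms(3) by (simp add: prod.distrib[symmetric] spin_configs_square)
  then show ?thesis unfolding PG PH PS by (simp add: algebra_simps)
qed

lemma spin_mult_Phi:
  assumes "finite G" "eta \<in> spin_configs"
  shows "eta x * Phi G eta = Phi (sym_diff G {x}) eta"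
  using Phi_mult_Phi[OF assms(1) _ assms(2), of "{x}"] by (simp add: Phi_def mult.commute)

lemma integral_Phi:
  assumes "finite G"
  shows "(\<integral>eta. Phi G eta \<partial>(Pi0::'d::finite config measure)) = (if G = {} then 1 else 0)"
proof -
  have "(\<integral>eta. Phi G eta \<partial>(Pi0::'d config measure)) = (\<Prod>x\<in>G. \<integral>y. y \<partial>uniform_spin)"
    unfolding Phi_def by (rule integral_Pi0_prod[OF assms])
  also have "\<dots> = (\<Prod>x\<in>G. 0)" by (simp add: integral_uniform_spin)
  finally show ?thesis using assms by (simp add: card_gt_0_iff)
qed

lemma integral_Phi_mult_Phi:
  assumes "finite G" "finite H"
  shows "(\<integral>eta. Phi G eta * Phi H eta \<partial>(Pi0::'d::finite config measure)) = (if G = H then 1 else 0)"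
proof -
  have "(\<integral>eta. Phi G eta * Phi H eta \<partial>(Pi0::'d config measure)) =
      (\<integral>eta. Phi (sym_diff G H) eta \<partial>(Pi0::'d config measure))"
    by (rule integral_cong_AE) (auto intro: AE_mp[OF AE_spin_configs] simp: Phi_mult_Phi assms)
  also have "\<dots> = (if G = H then 1 else 0)"
    using assms by (subst integral_Phi) auto
  finally show ?thesis .
qed

lemma integrable_mult_Phi:
  assumes "integrable (Pi0 :: 'd::finite config measure) f"
  shows "integrable (Pi0 :: 'd config measure) (\<lambda>eta. f eta * Phi G eta)"
proof (rule Bochner_Integration.integrable_bound[OF assms])
  show "(\<lambda>eta. f eta * Phi G eta) \<in> borel_measurable Pi0"
    using borel_measurable_integrable[OF assms] by measurable
  show "AE x in Pi0. norm (f x * Phi G x) \<le> norm (f x)"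
    using AE_spin_configs by (rule AE_mp) (auto simp: abs_mult Phi_abs)
qed

lemma integrable_Phi: "integrable (Pi0 :: 'd::finite config measure) (Phi G)"
  using integrable_mult_Phi[of "\<lambda>_. 1" G]
  by (simp add: finite_measure.integrable_const[OF finite_measure_Pi0])

lemma prod_spins_walsh_expansion:
  fixes g :: "int^'d::finite \<Rightarrow> real \<Rightarrow> real"
  assumes J: "finite J"
  obtains c where "\<And>eta. eta \<in> spin_configs \<Longrightarrow>
    (\<Prod>x\<in>J. g x (eta x)) = (\<Sum>B\<in>Pow J. c B * Phi B eta)"
proof
  define a where "a x = (g x 1 - g x (-1)) / 2" for x
  define b where "b x = (g x 1 + g x (-1)) / 2" for x
  fix eta :: "'d config" assume eta: "eta \<in> spin_configs"
  have "(\<Prod>x\<in>J. g x (eta x)) = (\<Prod>x\<in>J. a x * eta x + b x)"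
  proof (rule prod.cong[OF refl])
    fix x
    from eta have "eta x = 1 \<or> eta x = -1" by (simp add: spin_configs_def)
    then show "g x (eta x) = a x * eta x + b x" by (auto simp: a_def b_def field_simps)
  qed
  also have "\<dots> = (\<Sum>B\<in>Pow J. (\<Prod>x\<in>B. a x * eta x) * (\<Prod>x\<in>J-B. b x))"
    by (rule prod_add[OF J])
  also have "\<dots> = (\<Sum>B\<in>Pow J. ((\<Prod>x\<in>B. a x) * (\<Prod>x\<in>J-B. b x)) * Phi B eta)"
    unfolding Phi_def prod.distrib by (simp only: mult_ac)
  finally show "(\<Prod>x\<in>J. g x (eta x)) =
      (\<Sum>B\<in>Pow J. ((\<Prod>x\<in>B. a x) * (\<Prod>x\<in>J-B. b x)) * Phi B eta)" .
qed

lemma indicator_prod_emb: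
  "finite J \<Longrightarrow> indicator (prod_emb UNIV (\<lambda>_::int^'d::finite. uniform_spin) J (PiE J X)) eta =
    (\<Prod>x\<in>J. indicator (X x) (eta x) :: real)"
  by (simp add: prod_emb_def space_PiM indicator_def PiE_iff prod.neutral_const split: if_splits)

lemma integral_mult_cylinder_eq_0:
  fixes h :: "'d::finite config \<Rightarrow> real"
  assumes h: "integrable Pi0 h" and orth: "\<And>H. finite H \<Longrightarrow> (\<integral>eta. h eta * Phi H eta \<partial>Pi0) = 0"
    and J: "finite J"
  shows "(\<integral>eta. h eta * indicator (prod_emb UNIV (\<lambda>_::int^'d. uniform_spin) J (PiE J X)) eta \<partial>Pi0) = 0"
proof -
  obtain c where c: "\<And>eta. eta \<in> spin_configs \<Longrightarrow>
      (\<Prod>x\<in>J. indicator (X x) (eta x)) = (\<Sum>B\<in>Pow J. c B * Phi B eta)"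
    using prod_spins_walsh_expansion[OF J, of "\<lambda>x. indicator (X x)"] by blast
  have "(\<integral>eta. h eta * indicator (prod_emb UNIV (\<lambda>_::int^'d. uniform_spin) J (PiE J X)) eta \<partial>Pi0) =
      (\<integral>eta. (\<Sum>B\<in>Pow J. c B * (h eta * Phi B eta)) \<partial>Pi0)"
    using borel_measurable_integrable[OF h]
    by (intro integral_cong_AE) (auto intro: AE_mp[OF AE_spin_configs]
        simp: indicator_prod_emb[OF J] c sum_distrib_left algebra_simps)
  also have "\<dots> = (\<Sum>B\<in>Pow J. c B * (\<integral>eta. h eta * Phi B eta \<partial>Pi0))"
    by (subst Bochner_Integration.integral_sum) (auto intro!: integrable_mult_Phi h)
  also have "\<dots> = 0" using J by (auto intro!: sum.neutral simp: orth finite_subset)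
  finally show ?thesis .
qed

lemma emeasure_density_max_0:
  fixes h :: "'a \<Rightarrow> real"
  assumes h: "integrable N h" and A: "A \<in> sets N"
  shows "emeasure (density N (\<lambda>x. ennreal (max 0 (h x)))) A = ennreal (\<integral>x. max 0 (h x) * indicator A x \<partial>N)"
proof -
  have "emeasure (density N (\<lambda>x. ennreal (max 0 (h x)))) A = (\<integral>\<^sup>+x. ennreal (max 0 (h x) * indicator A x) \<partial>N)"
    using A borel_measurable_integrable[OF h]
    by (subst emeasure_density) (auto intro!: nn_integral_cong simp: indicator_def)
  also have "\<dots> = ennreal (\<integral>x. max 0 (h x) * indicator A x \<partial>N)"
    using h A by (intro nn_integral_eq_integral integrable_real_mult_indicator) auto
  finally show ?thesis .
qed

text \<open>Uniqueness of Walsh coefficients: the positive and negative parts of \<open>h\<close> define measures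
  agreeing on cylinder sets, hence everywhere.\<close>

lemma AE_zero_if_orthogonal_Phi:
  fixes h :: "'d::finite config \<Rightarrow> real"
  assumes h: "integrable Pi0 h" and orth: "\<And>H. finite H \<Longrightarrow> (\<integral>eta. h eta * Phi H eta \<partial>Pi0) = 0"
  shows "AE eta in Pi0. h eta = 0"
proof -
  define hp where "hp eta = ennreal (max 0 (h eta))" for eta
  define hn where "hn eta = ennreal (max 0 (- h eta))" for eta
  have hm: "h \<in> borel_measurable Pi0" using h by (rule borel_measurable_integrable)
  have same_mass: "emeasure (density Pi0 hp) A = emeasure (density Pi0 hn) A"
    if A: "A \<in> sets (Pi0 :: 'd config measure)" and
       eq: "(\<integral>eta. h eta * indicator A eta \<partial>Pi0) = 0" for A
  proof -
    have ip: "integrable Pi0 (\<lambda>eta. max 0 (h eta) * indicator A eta)"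
      and in': "integrable Pi0 (\<lambda>eta. max 0 (- h eta) * indicator A eta)"
      using h A by (auto intro!: integrable_real_mult_indicator)
    have "(\<integral>eta. max 0 (h eta) * indicator A eta \<partial>Pi0) - (\<integral>eta. max 0 (- h eta) * indicator A eta \<partial>Pi0)
        = (\<integral>eta. h eta * indicator A eta \<partial>Pi0)"
      by (subst Bochner_Integration.integral_diff[OF ip in', symmetric])
        (rule Bochner_Integration.integral_cong, auto simp: max_def)
    moreover have "emeasure (density Pi0 hp) A = ennreal (\<integral>eta. max 0 (h eta) * indicator A eta \<partial>Pi0)"
      unfolding hp_def by (rule emeasure_density_max_0[OF h A])
    moreover have "emeasure (density Pi0 hn) A = ennreal (\<integral>eta. max 0 (- h eta) * indicator A eta \<partial>Pi0)"
      unfolding hn_def by (rule emeasure_density_max_0[OF _ A]) (use h in simp)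
    ultimately show ?thesis using eq by simp
  qed
  have "density Pi0 hp = density Pi0 hn"
  proof (rule measure_eqI_PiM_infinite[where I=UNIV and M="\<lambda>_. uniform_spin"])
    show "sets (density Pi0 hp) = sets (PiM UNIV (\<lambda>_::int^'d. uniform_spin))"
      and "sets (density Pi0 hn) = sets (PiM UNIV (\<lambda>_::int^'d. uniform_spin))"
      by (simp_all add: Pi0_def)
    fix A :: "int^'d \<Rightarrow> real set" and J :: "(int^'d) set"
    assume J: "finite J" "J \<subseteq> UNIV" "\<And>i. i \<in> J \<Longrightarrow> A i \<in> sets uniform_spin"
    have "prod_emb UNIV (\<lambda>_. uniform_spin) J (Pi\<^sub>E J A) \<in> sets (Pi0::'d config measure)"
      unfolding Pi0_def using J by (intro sets_PiM_I) auto
    then show "emeasure (density Pi0 hp) (prod_emb UNIV (\<lambda>_. uniform_spin) J (Pi\<^sub>E J A)) =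
        emeasure (density Pi0 hn) (prod_emb UNIV (\<lambda>_. uniform_spin) J (Pi\<^sub>E J A))"
      by (rule same_mass[OF _ integral_mult_cylinder_eq_0[OF h orth J(1)]])
  next
    have "emeasure (density Pi0 hp) (space Pi0) = ennreal (\<integral>eta. max 0 (h eta) * indicator (space Pi0) eta \<partial>Pi0)"
      unfolding hp_def by (rule emeasure_density_max_0[OF h sets.top])
    then show "finite_measure (density Pi0 hp)"
      by (intro finite_measureI) auto
  qed
  then have "AE eta in Pi0. hp eta = hn eta"
    using sigma_finite_measure.density_unique_iff[of Pi0 hp hn] hm
    unfolding hp_def hn_def using prob_space_Pi0 prob_space_imp_sigma_finite by auto
  then show ?thesis
    by (rule AE_mp) (auto simp: hp_def hn_def max_def split: if_splits)
qed

lemma walsh_series_coef: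
  fixes a :: "nat \<Rightarrow> real" and e :: "nat \<Rightarrow> (int^'d::finite) set"
  assumes a: "summable (\<lambda>n. \<bar>a n\<bar>)" and e: "\<And>n. finite (e n)" and H: "finite H"
  shows "(\<integral>eta. (\<Sum>n. a n * Phi (e n) eta) * Phi H eta \<partial>(Pi0::'d config measure)) =
    (\<Sum>n. if e n = H then a n else 0)"
proof -
  define F where "F n eta = a n * Phi (e n) eta * Phi H eta" for n eta
  have F_int: "integrable Pi0 (F n)" for n
    unfolding F_def by (intro integrable_mult_Phi integrable_mult_right integrable_Phi)
  have F_norm: "(\<integral>eta. norm (F n eta) \<partial>Pi0) = \<bar>a n\<bar>" for n
  proof -
    have "(\<integral>eta. norm (F n eta) \<partial>Pi0) = (\<integral>eta. \<bar>a n\<bar> \<partial>(Pi0::'d config measure))"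
      by (rule integral_cong_AE)
        (auto intro: AE_mp[OF AE_spin_configs] simp: F_def abs_mult Phi_abs)
    then show ?thesis by (simp add: measure_Pi0_UNIV)
  qed
  have "(\<integral>eta. (\<Sum>n. a n * Phi (e n) eta) * Phi H eta \<partial>Pi0) = (\<integral>eta. (\<Sum>n. F n eta) \<partial>Pi0)"
  proof (rule integral_cong_AE)
    show "(\<lambda>eta. (\<Sum>n. a n * Phi (e n) eta) * Phi H eta) \<in> borel_measurable Pi0"
      and "(\<lambda>eta. \<Sum>n. F n eta) \<in> borel_measurable Pi0"
      using F_int by (auto intro!: borel_measurable_times borel_measurable_suminf)
    have summ: "summable (\<lambda>n. a n * Phi (e n) eta)" if "eta \<in> spin_configs" for eta
      using a that by (intro summable_norm_cancel[where f="\<lambda>n. a n * Phi (e n) eta"]) (simp add: abs_mult Phi_abs)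
    show "AE eta in Pi0. (\<Sum>n. a n * Phi (e n) eta) * Phi H eta = (\<Sum>n. F n eta)"
      using AE_spin_configs by (rule AE_mp) (auto simp: F_def suminf_mult2 summ)
  qed
  also have "\<dots> = (\<Sum>n. \<integral>eta. F n eta \<partial>Pi0)"
  proof (rule integral_suminf[OF F_int])
    show "AE eta in Pi0. summable (\<lambda>n. norm (F n eta))"
      using AE_spin_configs by (rule AE_mp) (auto simp: F_def abs_mult Phi_abs a)
    show "summable (\<lambda>n. \<integral>eta. norm (F n eta) \<partial>Pi0)" unfolding F_norm by (rule a)
  qed
  also have "\<dots> = (\<Sum>n. if e n = H then a n else 0)"
    unfolding F_def mult.assoc by (intro suminf_cong) (simp add: integral_Phi_mult_Phi e H)
  finally show ?thesis .
qed

lemma HM_borel_measurable: "f \<in> HM M \<Longrightarrow> f \<in> borel_measurable (Pi0 :: 'd::finite config measure)"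
  by (simp add: HM_def L2Pi0_def)

lemma HM_square_integrable: "f \<in> HM M \<Longrightarrow> integrable (Pi0 :: 'd::finite config measure) (\<lambda>eta. (f eta)^2)"
  by (simp add: HM_def L2Pi0_def)

lemma HM_summable: "f \<in> HM M \<Longrightarrow> (\<lambda>G. \<bar>walsh_coef f G\<bar> * M ^ card G) summable_on {G. finite G}"
  by (simp add: HM_def)

lemma HM_integrable: "f \<in> HM M \<Longrightarrow> integrable (Pi0 :: 'd::finite config measure) f"
  by (rule finite_measure.square_integrable_imp_integrable[OF finite_measure_Pi0 HM_borel_measurable HM_square_integrable])

lemma walsh_coef_le_normM:
  assumes "f \<in> HM M" "0 \<le> M" "finite G"
  shows "\<bar>walsh_coef f G\<bar> * M ^ card G \<le> normM M f"
proof -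
  have "\<bar>walsh_coef f G\<bar> * M ^ card G = (\<Sum>\<^sub>\<infinity>H\<in>{G}. \<bar>walsh_coef f H\<bar> * M ^ card H)"
    by simp
  also have "\<dots> \<le> normM M f"
    unfolding normM_def by (rule infsum_mono2) (use assms HM_summable in auto)
  finally show ?thesis .
qed

lemma infinite_finite_subsets: "infinite {G::(int^'d::finite) set. finite G}"
proof
  assume "finite {G::(int^'d) set. finite G}"
  moreover have "(\<lambda>x. {x}) ` (UNIV :: (int^'d) set) \<subseteq> {G. finite G}" by auto
  ultimately have "finite ((\<lambda>x. {x}) ` (UNIV :: (int^'d) set))" by (rule finite_subset[rotated])
  then have "finite (UNIV :: (int^'d) set)" by (rule finite_imageD) (simp add: inj_on_def)
  then show False using infinite_UNIV_vec[OF infinite_UNIV_int] by blast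
qed

lemma
  fixes f :: "'d::finite config \<Rightarrow> real"
  assumes f: "f \<in> HM M" and M: "1 \<le> M" and e: "bij_betw e UNIV {G. finite G}"
  shows summable_abs_walsh_coef: "summable (\<lambda>n. \<bar>walsh_coef f (e n)\<bar>)"
    and suminf_abs_walsh_coef_le: "(\<Sum>n. \<bar>walsh_coef f (e n)\<bar>) \<le> normM M f"
proof -
  define b where "b n = \<bar>walsh_coef f (e n)\<bar> * M ^ card (e n)" for n
  have "b summable_on UNIV" "infsum b UNIV = normM M f"
    unfolding b_def normM_def
    using summable_on_reindex_bij_betw[OF e, of "\<lambda>G. \<bar>walsh_coef f G\<bar> * M ^ card G"]
      infsum_reindex_bij_betw[OF e, of "\<lambda>G. \<bar>walsh_coef f G\<bar> * M ^ card G"] HM_summable[OF f]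
    by simp_all
  then have b: "b sums normM M f" by (metis has_sum_imp_sums summable_iff_has_sum_infsum)
  have le: "\<bar>walsh_coef f (e n)\<bar> \<le> b n" for n
    using mult_left_mono[OF one_le_power[OF M, of "card (e n)"], of "\<bar>walsh_coef f (e n)\<bar>"]
    by (simp add: b_def)
  show summable: "summable (\<lambda>n. \<bar>walsh_coef f (e n)\<bar>)"
    using b le by (auto intro: summable_comparison_test' sums_summable)
  show "(\<Sum>n. \<bar>walsh_coef f (e n)\<bar>) \<le> normM M f"
    using suminf_le[OF le summable sums_summable[OF b]] b by (simp add: sums_iff)
qed

text \<open>A function of \<open>H\<^sub>M\<close> coincides a.e. with its absolutely convergent Walsh series, so it
  is essentially bounded by \<open>\<parallel>f\<parallel>\<^sub>M\<close> when \<open>M \<ge> 1\<close>.\<close>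

lemma AE_abs_le_normM:
  fixes f :: "'d::finite config \<Rightarrow> real"
  assumes f: "f \<in> HM M" and M: "1 \<le> M"
  shows "AE eta in Pi0. \<bar>f eta\<bar> \<le> normM M f"
proof -
  define e where "e = from_nat_into {G::(int^'d) set. finite G}"
  have bij: "bij_betw e UNIV {G. finite G}"
    unfolding e_def
    by (rule bij_betw_from_nat_into) (auto simp: countable_Collect_finite infinite_finite_subsets)
  have e_fin: "finite (e n)" for n using bij unfolding bij_betw_def by auto
  define a where "a n = walsh_coef f (e n)" for n
  have a: "summable (\<lambda>n. \<bar>a n\<bar>)" and a_le: "(\<Sum>n. \<bar>a n\<bar>) \<le> normM M f"
    unfolding a_def by (rule summable_abs_walsh_coef[OF f M bij] suminf_abs_walsh_coef_le[OF f M bij])+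
  define g where "g eta = (\<Sum>n. a n * Phi (e n) eta)" for eta
  have g_le: "\<bar>g eta\<bar> \<le> normM M f" if "eta \<in> spin_configs" for eta
  proof -
    have "summable (\<lambda>n. norm (a n * Phi (e n) eta))"
      using a that by (simp add: abs_mult Phi_abs)
    then have "\<bar>g eta\<bar> \<le> (\<Sum>n. norm (a n * Phi (e n) eta))"
      unfolding g_def by (metis real_norm_def summable_norm)
    also have "\<dots> = (\<Sum>n. \<bar>a n\<bar>)" using that by (simp add: abs_mult Phi_abs)
    finally show ?thesis using a_le by simp
  qed
  have "g \<in> borel_measurable Pi0"
    unfolding g_def by (intro borel_measurable_suminf borel_measurable_times borel_measurable_const borel_measurable_Phi)
  moreover have "AE eta in Pi0. \<bar>g eta\<bar> \<le> normM M f"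
    using AE_spin_configs by (rule AE_mp) (auto intro: g_le)
  ultimately have g_int: "integrable Pi0 g"
    by (intro finite_measure.integrable_const_bound[OF finite_measure_Pi0]) auto
  have "AE eta in Pi0. f eta - g eta = 0"
  proof (rule AE_zero_if_orthogonal_Phi)
    show "integrable Pi0 (\<lambda>eta. f eta - g eta)" using HM_integrable[OF f] g_int by auto
    fix H :: "(int^'d) set" assume H: "finite H"
    then obtain m where m: "e m = H" using bij by (metis bij_betw_iff_bijections mem_Collect_eq)
    then have "e n = H \<longleftrightarrow> n = m" for n using bij by (auto simp: bij_betw_def inj_on_def)
    then have "(\<integral>eta. g eta * Phi H eta \<partial>Pi0) = walsh_coef f H"
      unfolding g_def walsh_series_coef[OF a e_fin H]
      by (simp add: sums_unique[OF sums_single, symmetric] a_def m)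
    moreover have "(\<integral>eta. (f eta - g eta) * Phi H eta \<partial>Pi0) =
        walsh_coef f H - (\<integral>eta. g eta * Phi H eta \<partial>Pi0)"
      unfolding walsh_coef_def left_diff_distrib
      by (rule Bochner_Integration.integral_diff) (auto intro!: integrable_mult_Phi HM_integrable[OF f] g_int)
    ultimately show "(\<integral>eta. (f eta - g eta) * Phi H eta \<partial>Pi0) = 0" by simp
  qed
  then show ?thesis
    using AE_spin_configs by eventually_elim (use g_le in auto)
qed

lemma walsh_coef_empty: "walsh_coef f {} = (\<integral>eta. f eta \<partial>Pi0)"
  by (simp add: walsh_coef_def Phi_def)

lemma walsh_coef_cong_AE:
  assumes "f \<in> borel_measurable (Pi0 :: 'd::finite config measure)" "g \<in> borel_measurable Pi0"
    and "AE eta in Pi0. f eta = g eta"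
  shows "walsh_coef f G = walsh_coef g G"
  unfolding walsh_coef_def using assms
  by (intro integral_cong_AE) (auto elim: AE_mp)

lemma walsh_coef_spin_mult:
  assumes "f \<in> borel_measurable (Pi0 :: 'd::finite config measure)" "finite G"
  shows "walsh_coef (\<lambda>eta. eta x * f eta) G = walsh_coef f (sym_diff G {x})"
  unfolding walsh_coef_def
proof (rule integral_cong_AE)
  show "(\<lambda>eta. eta x * f eta * Phi G eta) \<in> borel_measurable Pi0"
    and "(\<lambda>eta. f eta * Phi (sym_diff G {x}) eta) \<in> borel_measurable Pi0"
    using assms(1) by measurable
  show "AE eta in Pi0. eta x * f eta * Phi G eta = f eta * Phi (sym_diff G {x}) eta"
    using AE_spin_configs
    by (rule AE_mp) (use assms(2) in \<open>auto simp: spin_mult_Phi[symmetric] algebra_simps\<close>)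
qed

lemma walsh_coef_add_const:
  assumes "integrable (Pi0 :: 'd::finite config measure) f" "finite G"
  shows "walsh_coef (\<lambda>eta. f eta + c) G = walsh_coef f G + c * (if G = {} then 1 else 0)"
proof -
  have "walsh_coef (\<lambda>eta. f eta + c) G = (\<integral>eta. f eta * Phi G eta + c * Phi G eta \<partial>Pi0)"
    unfolding walsh_coef_def by (simp add: algebra_simps)
  also have "\<dots> = walsh_coef f G + c * (\<integral>eta. Phi G eta \<partial>(Pi0 :: 'd config measure))"
    unfolding walsh_coef_def
    by (subst Bochner_Integration.integral_add) (auto intro!: integrable_mult_Phi assms integrable_Phi)
  finally show ?thesis using assms by (simp add: integral_Phi)
qed

lemma L2Pi0_add_const:
  assumes "f \<in> L2Pi0"
  shows "(\<lambda>eta. f eta + c) \<in> (L2Pi0 :: ('d::finite config \<Rightarrow> real) set)"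
proof -
  have f: "f \<in> borel_measurable Pi0" "integrable Pi0 (\<lambda>eta. (f eta)^2)"
    using assms by (auto simp: L2Pi0_def)
  then have "integrable Pi0 f"
    by (rule finite_measure.square_integrable_imp_integrable[OF finite_measure_Pi0])
  then have "integrable Pi0 (\<lambda>eta. (f eta)^2 + 2 * c * f eta + c^2)"
    using f by (intro Bochner_Integration.integrable_add integrable_mult_right
        finite_measure.integrable_const[OF finite_measure_Pi0])
  then show ?thesis
    using f by (simp add: L2Pi0_def power2_eq_square algebra_simps)
qed

lemma L2Pi0_spin_mult:
  assumes "f \<in> L2Pi0"
  shows "(\<lambda>eta. eta x * f eta) \<in> (L2Pi0 :: ('d::finite config \<Rightarrow> real) set)"
proof -
  have f: "f \<in> borel_measurable Pi0" "integrable Pi0 (\<lambda>eta. (f eta)^2)"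
    using assms by (auto simp: L2Pi0_def)
  have "integrable Pi0 (\<lambda>eta. (eta x * f eta)^2)"
    using f AE_spin_configs
    by (intro integrable_cong_AE[THEN iffD1, OF _ _ _ f(2)])
      (auto elim!: AE_mp simp: power_mult_distrib power2_eq_square spin_configs_square)
  then show ?thesis using f(1) by (simp add: L2Pi0_def)
qed

lemma summable_on_if_empty:
  "(\<lambda>G::'a set. if G = {} then (c::real) else 0) summable_on {G. finite G}"
  and infsum_if_empty:
  "(\<Sum>\<^sub>\<infinity>G\<in>{G::'a set. finite G}. if G = {} then (c::real) else 0) = c"
proof -
  have "(\<Sum>\<^sub>\<infinity>G\<in>{G::'a set. finite G}. if G = {} then c else 0) =
      (\<Sum>\<^sub>\<infinity>G\<in>{{}::'a set}. if G = {} then c else 0)"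
    by (rule infsum_cong_neutral) auto
  then show "(\<Sum>\<^sub>\<infinity>G\<in>{G::'a set. finite G}. if G = {} then (c::real) else 0) = c" by simp
  have "(\<lambda>G::'a set. if G = {} then (c::real) else 0) summable_on {{}}" by simp
  then show "(\<lambda>G::'a set. if G = {} then (c::real) else 0) summable_on {G. finite G}"
    by (rule summable_on_cong_neutral[THEN iffD1, rotated -1]) auto
qed

lemma HM_add_const:
  assumes f: "f \<in> HM M" and M: "0 \<le> M"
  shows "(\<lambda>eta. f eta + c) \<in> HM M \<and> normM M (\<lambda>eta. f eta + c) \<le> normM M f + \<bar>c\<bar>"
proof -
  let ?a = "\<lambda>G. \<bar>walsh_coef f G\<bar> * M ^ card G"
  let ?e = "\<lambda>G::(int^'a) set. if G = {} then \<bar>c\<bar> else 0"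
  let ?b = "\<lambda>G. \<bar>walsh_coef (\<lambda>eta. f eta + c) G\<bar> * M ^ card G"
  have le: "?b G \<le> ?a G + ?e G" if "G \<in> {G. finite G}" for G
    using that M by (cases "G = {}") (auto simp: walsh_coef_add_const HM_integrable[OF f] abs_triangle_ineq)
  have sa: "?a summable_on {G. finite G}" using HM_summable[OF f] .
  have se: "?e summable_on {G. finite G}" by (rule summable_on_if_empty)
  have sae: "(\<lambda>G. ?a G + ?e G) summable_on {G. finite G}" by (rule summable_on_add[OF sa se])
  have sb: "?b summable_on {G. finite G}"
    by (rule summable_on_comparison_test[OF sae le]) (use M in auto)
  have "normM M (\<lambda>eta. f eta + c) \<le> (\<Sum>\<^sub>\<infinity>G\<in>{G. finite G}. ?a G + ?e G)"
    unfolding normM_def by (rule infsum_mono[OF sb sae le])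
  also have "\<dots> = normM M f + \<bar>c\<bar>"
    unfolding normM_def by (simp add: infsum_add[OF sa se] infsum_if_empty)
  moreover have "f \<in> L2Pi0" using f by (simp add: HM_def)
  ultimately show ?thesis
    using sb L2Pi0_add_const by (simp add: HM_def)
qed

lemma card_le_card_sym_diff_singleton: "finite G \<Longrightarrow> card G \<le> card (sym_diff G {a}) + 1"
proof -
  assume "finite G"
  have "card G \<le> card (insert a (sym_diff G {a}))"
    by (rule card_mono) (use \<open>finite G\<close> in auto)
  also have "\<dots> \<le> card (sym_diff G {a}) + 1" by (simp add: card_insert_le_m1 card_insert_if)
  finally show ?thesis .
qed

lemma bij_betw_sym_diff_singleton: "bij_betw (\<lambda>G. sym_diff G {a}) {G. finite G} {G. finite G}"
  by (rule bij_betwI[where g="\<lambda>G. sym_diff G {a}"]) auto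

lemma HM_spin_mult:
  assumes f: "f \<in> HM M" and M: "1 \<le> M"
  shows "(\<lambda>eta. eta x * f eta) \<in> HM M \<and> normM M (\<lambda>eta. eta x * f eta) \<le> M * normM M f"
proof -
  let ?a = "\<lambda>G. \<bar>walsh_coef f G\<bar> * M ^ card G"
  let ?b = "\<lambda>G. \<bar>walsh_coef (\<lambda>eta. eta x * f eta) G\<bar> * M ^ card G"
  let ?c = "\<lambda>G. M * ?a (sym_diff G {x})"
  have le: "?b G \<le> ?c G" if "G \<in> {G. finite G}" for G
  proof -
    have "?b G = \<bar>walsh_coef f (sym_diff G {x})\<bar> * M ^ card G"
      using that by (simp add: walsh_coef_spin_mult HM_borel_measurable[OF f])
    also have "\<dots> \<le> \<bar>walsh_coef f (sym_diff G {x})\<bar> * M ^ (card (sym_diff G {x}) + 1)"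
      using M that card_le_card_sym_diff_singleton[of G] by (intro mult_left_mono power_increasing) auto
    finally show ?thesis by (simp add: algebra_simps)
  qed
  have sa: "(\<lambda>G. ?a (sym_diff G {x})) summable_on {G. finite G}"
    using summable_on_reindex_bij_betw[OF bij_betw_sym_diff_singleton, of ?a] HM_summable[OF f] by simp
  have sc: "?c summable_on {G. finite G}" using summable_on_cmult_right[OF sa] .
  have sb: "?b summable_on {G. finite G}"
    by (rule summable_on_comparison_test[OF sc le]) (use M in auto)
  have "normM M (\<lambda>eta. eta x * f eta) \<le> infsum ?c {G. finite G}"
    unfolding normM_def by (rule infsum_mono[OF sb sc le])
  also have "\<dots> = M * infsum (\<lambda>G. ?a (sym_diff G {x})) {G. finite G}"
    by (rule infsum_cmult_right')
  also have "infsum (\<lambda>G. ?a (sym_diff G {x})) {G. finite G} = normM M f"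
    unfolding normM_def by (rule infsum_reindex_bij_betw[OF bij_betw_sym_diff_singleton])
  moreover have "f \<in> L2Pi0" using f by (simp add: HM_def)
  ultimately show ?thesis
    using sb L2Pi0_spin_mult by (simp add: HM_def)
qed

lemma HM_cong_AE:
  assumes f: "f \<in> HM M" and g: "g \<in> borel_measurable Pi0" and ae: "AE eta in Pi0. f eta = g eta"
  shows "g \<in> HM M \<and> normM M g = normM M f"
proof -
  have "walsh_coef g G = walsh_coef f G" for G
    using ae by (intro walsh_coef_cong_AE[OF g HM_borel_measurable[OF f]]) (auto elim: AE_mp)
  moreover have "integrable Pi0 (\<lambda>eta. (g eta)^2)"
    using HM_borel_measurable[OF f] g ae
    by (intro integrable_cong_AE[THEN iffD1, OF _ _ _ HM_square_integrable[OF f]]) (auto elim: AE_mp)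
  ultimately show ?thesis using f g by (simp add: HM_def L2Pi0_def normM_def)
qed

lemma prob_space_PiM_pmf: "prob_space (PiM UNIV (\<lambda>i. measure_pmf (p i)))"
  by (rule prob_space_PiM) (simp add: prob_space_measure_pmf)

lemma measurable_PiM_pmf_reindex:
  "(\<lambda>\<omega> x. g x (\<omega> (\<sigma> x))) \<in> measurable (PiM UNIV (\<lambda>i. measure_pmf (p i))) (PiM UNIV (\<lambda>i. measure_pmf (q i)))"
  by (rule measurable_PiM_single')
    (auto intro!: measurable_compose[OF measurable_component_singleton] simp: measurable_count_space_eq1)

lemma distr_PiM_pmf_reindex:
  fixes p :: "'i::countable \<Rightarrow> 'a pmf" and g :: "'i \<Rightarrow> 'a \<Rightarrow> 'b" and \<sigma> :: "'i \<Rightarrow> 'i"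
  assumes bij: "bij \<sigma>"
  shows "distr (PiM UNIV (\<lambda>i. measure_pmf (p i))) (PiM UNIV (\<lambda>i. measure_pmf (map_pmf (g i) (p (\<sigma> i)))))
      (\<lambda>\<omega> i. g i (\<omega> (\<sigma> i))) = PiM UNIV (\<lambda>i. measure_pmf (map_pmf (g i) (p (\<sigma> i))))"
    (is "distr ?P ?Q ?h = ?Q")
proof (rule measure_eqI_PiM_infinite[where I=UNIV and M="\<lambda>i. measure_pmf (map_pmf (g i) (p (\<sigma> i)))"])
  show "sets (distr ?P ?Q ?h) = sets ?Q" and "sets ?Q = sets ?Q" by simp_all
  have h: "?h \<in> measurable ?P ?Q" by (rule measurable_PiM_pmf_reindex)
  fix A J assume J: "finite J" "J \<subseteq> (UNIV::'i set)"
  define \<tau> where "\<tau> = inv \<sigma>"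
  have st: "\<sigma> (\<tau> j) = j" for j using bij unfolding \<tau>_def by (simp add: bij_is_surj surj_f_inv_f)
  have ts: "\<tau> (\<sigma> i) = i" for i using bij unfolding \<tau>_def by (simp add: bij_is_inj inv_f_f)
  have "?h -` prod_emb UNIV (\<lambda>i. measure_pmf (map_pmf (g i) (p (\<sigma> i)))) J (PiE J A)
     = prod_emb UNIV (\<lambda>i. measure_pmf (p i)) (\<sigma> ` J) (PiE (\<sigma> ` J) (\<lambda>j. g (\<tau> j) -` A (\<tau> j)))"
    by (auto simp: prod_emb_def PiE_iff ts st)
  then have "emeasure (distr ?P ?Q ?h) (prod_emb UNIV (\<lambda>i. measure_pmf (map_pmf (g i) (p (\<sigma> i)))) J (PiE J A))
      = emeasure ?P (prod_emb UNIV (\<lambda>i. measure_pmf (p i)) (\<sigma> ` J) (PiE (\<sigma> ` J) (\<lambda>j. g (\<tau> j) -` A (\<tau> j))))"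
    by (subst emeasure_distr[OF h]) (auto simp: space_PiM intro!: sets_PiM_I J)
  also have "\<dots> = (\<Prod>j\<in>\<sigma> ` J. emeasure (measure_pmf (p j)) (g (\<tau> j) -` A (\<tau> j)))"
    using J by (intro emeasure_PiM_emb) (auto simp: prob_space_measure_pmf)
  also have "\<dots> = (\<Prod>i\<in>J. emeasure (measure_pmf (map_pmf (g i) (p (\<sigma> i)))) (A i))"
    using bij by (subst prod.reindex) (auto simp: ts emeasure_map_pmf intro: inj_on_subset bij_is_inj)
  also have "\<dots> = emeasure ?Q (prod_emb UNIV (\<lambda>i. measure_pmf (map_pmf (g i) (p (\<sigma> i)))) J (PiE J A))"
    using J by (intro emeasure_PiM_emb[symmetric]) (auto simp: prob_space_measure_pmf)
  finally show "emeasure (distr ?P ?Q ?h) (prod_emb UNIV (\<lambda>i. measure_pmf (map_pmf (g i) (p (\<sigma> i)))) J (PiE J A))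
      = emeasure ?Q (prod_emb UNIV (\<lambda>i. measure_pmf (map_pmf (g i) (p (\<sigma> i)))) J (PiE J A))" .
next
  show "finite_measure (distr ?P ?Q ?h)"
    using prob_space.prob_space_distr[OF prob_space_PiM_pmf
        measurable_PiM_pmf_reindex[of g \<sigma> p "\<lambda>i. map_pmf (g i) (p (\<sigma> i))"]] by (simp add: prob_space_def)
qed

section \<open>The one-step operator\<close>

definition flip_rate :: "real \<Rightarrow> real \<Rightarrow> int^'d::finite \<Rightarrow> real" where
  "flip_rate q0 q1 y = (if y = 0 then q1 else q0)"

definition flip_field :: "real \<Rightarrow> real \<Rightarrow> (int^'d::finite \<Rightarrow> bool) measure" where
  "flip_field q0 q1 = PiM UNIV (\<lambda>y. measure_pmf (bernoulli_pmf (flip_rate q0 q1 y)))"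

definition flip_spins :: "'d::finite config \<Rightarrow> (int^'d \<Rightarrow> bool) \<Rightarrow> 'd config" where
  "flip_spins eta \<omega> = (\<lambda>y. if \<omega> y then - eta y else eta y)"

definition shift_config :: "int^'d::finite \<Rightarrow> 'd config \<Rightarrow> 'd config" where
  "shift_config u \<xi> = (\<lambda>x. \<xi> (u + x))"

definition jump_integral :: "real \<Rightarrow> real \<Rightarrow> int^'d::finite \<Rightarrow> ('d config \<Rightarrow> real) \<Rightarrow> 'd config \<Rightarrow> real" where
  "jump_integral q0 q1 u f eta = (\<integral>\<omega>. f (shift_config u (flip_spins eta \<omega>)) \<partial>flip_field q0 q1)"

lemma prob_space_flip_field: "prob_space (flip_field q0 q1)"
  unfolding flip_field_def by (rule prob_space_PiM_pmf)

lemma measurable_pair_shift_flip_spins: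
  "(\<lambda>p. shift_config u (flip_spins (fst p) (snd p)))
    \<in> measurable ((Pi0 :: 'd::finite config measure) \<Otimes>\<^sub>M flip_field q0 q1) (Pi0 :: 'd config measure)"
proof -
  let ?N = "(Pi0 :: 'd config measure) \<Otimes>\<^sub>M flip_field q0 q1"
  have spin: "(\<lambda>p. g (fst p z)) \<in> ?N \<rightarrow>\<^sub>M count_space UNIV" for z and g :: "real \<Rightarrow> real"
    unfolding Pi0_def
    by (rule measurable_compose[OF measurable_fst], rule measurable_compose[OF measurable_component_singleton])
      (simp_all add: measurable_count_space_eq1)
  have flip: "{p \<in> space ?N. snd p z} \<in> sets ?N" for z
    unfolding flip_field_def by measurable
  have "(\<lambda>p. shift_config u (flip_spins (fst p) (snd p)) i) \<in> ?N \<rightarrow>\<^sub>M uniform_spin" for i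
    unfolding shift_config_def flip_spins_def
    using measurable_If[OF spin[of uminus] spin[of "\<lambda>y. y"] flip] by simp
  then show ?thesis
    unfolding Pi0_def by (intro measurable_PiM_single') auto
qed

lemma measurable_shift_flip_spins:
  "(\<lambda>\<omega>. shift_config u (flip_spins eta \<omega>)) \<in> measurable (flip_field q0 q1) (Pi0 :: 'd::finite config measure)"
  using measurable_PiM_pmf_reindex[where g="\<lambda>x b. if b then - eta (u + x) else eta (u + x)" and \<sigma>="\<lambda>x. u + x"]
  unfolding flip_field_def Pi0_def by (simp add: shift_config_def flip_spins_def)

lemma measurable_shift_config: "shift_config u \<in> measurable (Pi0 :: 'd::finite config measure) (Pi0 :: 'd config measure)"
  using measurable_PiM_pmf_reindex[where g="\<lambda>x b. b" and \<sigma>="\<lambda>x. u + x"]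
  unfolding Pi0_def by (simp add: shift_config_def[abs_def])

lemma borel_measurable_comp_shift_flip_spins:
  "f \<in> borel_measurable (Pi0 :: 'd::finite config measure) \<Longrightarrow>
    (\<lambda>\<omega>. f (shift_config u (flip_spins eta \<omega>))) \<in> borel_measurable (flip_field q0 q1)"
  using measurable_compose[OF measurable_shift_flip_spins] by blast

lemma env_step_eq_distr_flip_spins:
  "env_step q0 q1 eta = distr (flip_field q0 q1) (env_step q0 q1 eta) (flip_spins eta)"
proof -
  have step: "env_step q0 q1 eta = PiM UNIV (\<lambda>y. measure_pmf (spin_step (flip_rate q0 q1 y) (eta y)))"
    unfolding env_step_def flip_rate_def ..
  have "distr (flip_field q0 q1) (env_step q0 q1 eta) (flip_spins eta) = env_step q0 q1 eta"
    unfolding step flip_field_def spin_step_def flip_spins_def[abs_def]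
    using distr_PiM_pmf_reindex[OF bij_id, where p="\<lambda>y. bernoulli_pmf (flip_rate q0 q1 y)"
        and g="\<lambda>y b. if b then - eta y else eta y"]
    by simp
  then show ?thesis ..
qed

lemma integral_env_step_shift:
  assumes f: "f \<in> borel_measurable (Pi0 :: 'd::finite config measure)"
  shows "(\<integral>\<xi>. f (shift_config u \<xi>) \<partial>env_step q0 q1 eta) = jump_integral q0 q1 u f eta"
proof -
  have "flip_spins eta \<in> measurable (flip_field q0 q1) (env_step q0 q1 eta)"
    using measurable_PiM_pmf_reindex[where g="\<lambda>y b. if b then - eta y else eta y" and \<sigma>="\<lambda>y. y"]
    unfolding flip_field_def env_step_def by (simp add: flip_spins_def[abs_def])
  moreover have "(\<lambda>\<xi>. f (shift_config u \<xi>)) \<in> borel_measurable (env_step q0 q1 eta)"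
  proof -
    have sets_eq: "sets (env_step q0 q1 eta) = sets (Pi0 :: 'd config measure)"
      unfolding env_step_def Pi0_def by (rule sets_PiM_cong) auto
    show ?thesis
      using measurable_compose[OF measurable_shift_config f] by (simp only: measurable_cong_sets[OF sets_eq refl])
  qed
  ultimately show ?thesis
    unfolding jump_integral_def
    by (subst env_step_eq_distr_flip_spins) (rule integral_distr)
qed

lemma Top_eq_jump_integral:
  "f \<in> borel_measurable (Pi0 :: 'd::finite config measure) \<Longrightarrow>
    Top S P0 c eps q0 q1 f eta = (\<Sum>u\<in>S. (P0 u + eps * c u * eta 0) * jump_integral q0 q1 u f eta)"
  unfolding Top_def by (simp add: integral_env_step_shift[unfolded shift_config_def])

lemma borel_measurable_jump_integral:
  fixes f :: "'d::finite config \<Rightarrow> real"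
  assumes f: "f \<in> borel_measurable Pi0"
  shows "jump_integral q0 q1 u f \<in> borel_measurable Pi0"
proof -
  interpret flip_field: prob_space "flip_field q0 q1 :: (int^'d \<Rightarrow> bool) measure"
    by (rule prob_space_flip_field)
  have "case_prod (\<lambda>eta \<omega>. f (shift_config u (flip_spins eta \<omega>))) \<in> borel_measurable (Pi0 \<Otimes>\<^sub>M flip_field q0 q1)"
    using measurable_compose[OF measurable_pair_shift_flip_spins f] by (simp add: case_prod_unfold)
  then show ?thesis
    unfolding jump_integral_def[abs_def] by (rule flip_field.borel_measurable_lebesgue_integral)
qed

lemma borel_measurable_Top:
  fixes f :: "'d::finite config \<Rightarrow> real"
  assumes f: "f \<in> borel_measurable Pi0"
  shows "Top S P0 c eps q0 q1 f \<in> borel_measurable Pi0"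
proof -
  have "(\<lambda>eta. \<Sum>u\<in>S. (P0 u + eps * c u * eta 0) * jump_integral q0 q1 u f eta) \<in> borel_measurable Pi0"
  proof (intro borel_measurable_sum borel_measurable_times)
    fix u show "(\<lambda>eta. P0 u + eps * c u * eta 0) \<in> borel_measurable Pi0"
      by (rule borel_measurable_spin)
  qed (rule borel_measurable_jump_integral[OF f])
  moreover have "Top S P0 c eps q0 q1 f = (\<lambda>eta. \<Sum>u\<in>S. (P0 u + eps * c u * eta 0) * jump_integral q0 q1 u f eta)"
    using Top_eq_jump_integral[OF f] by blast
  ultimately show ?thesis by (simp only:)
qed

lemma flip_spins_in_spin_configs: "eta \<in> spin_configs \<Longrightarrow> flip_spins eta \<omega> \<in> spin_configs"
  by (auto simp: spin_configs_def flip_spins_def)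

lemma shift_config_in_spin_configs: "\<xi> \<in> spin_configs \<Longrightarrow> shift_config u \<xi> \<in> spin_configs"
  by (auto simp: spin_configs_def shift_config_def)

lemma
  assumes f: "f \<in> borel_measurable (Pi0 :: 'd::finite config measure)"
    and K: "\<And>\<xi>. \<xi> \<in> spin_configs \<Longrightarrow> \<bar>f \<xi>\<bar> \<le> K" and eta: "eta \<in> spin_configs"
  shows integrable_shift_flip_spins: "integrable (flip_field q0 q1) (\<lambda>\<omega>. f (shift_config u (flip_spins eta \<omega>)))"
    and abs_jump_integral_le: "\<bar>jump_integral q0 q1 u f eta\<bar> \<le> K"
proof -
  interpret flip_field: prob_space "flip_field q0 q1" by (rule prob_space_flip_field)
  show i: "integrable (flip_field q0 q1) (\<lambda>\<omega>. f (shift_config u (flip_spins eta \<omega>)))"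
    by (rule flip_field.integrable_const_bound[where B=K])
      (auto intro!: borel_measurable_comp_shift_flip_spins f K shift_config_in_spin_configs flip_spins_in_spin_configs eta)
  have "\<bar>jump_integral q0 q1 u f eta\<bar> \<le> (\<integral>\<omega>. \<bar>f (shift_config u (flip_spins eta \<omega>))\<bar> \<partial>flip_field q0 q1)"
    unfolding jump_integral_def by (rule integral_abs_bound)
  also have "\<dots> \<le> (\<integral>\<omega>. K \<partial>(flip_field q0 q1 :: (int^'d \<Rightarrow> bool) measure))"
    by (intro Bochner_Integration.integral_mono_AE) (auto intro!: K shift_config_in_spin_configs flip_spins_in_spin_configs eta i)
  finally show "\<bar>jump_integral q0 q1 u f eta\<bar> \<le> K" by (simp add: flip_field.prob_space)
qed

lemma jump_integral_add_const:
  assumes f: "f \<in> borel_measurable (Pi0 :: 'd::finite config measure)"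
    and K: "\<And>\<xi>. \<xi> \<in> spin_configs \<Longrightarrow> \<bar>f \<xi>\<bar> \<le> K" and eta: "eta \<in> spin_configs"
  shows "jump_integral q0 q1 u (\<lambda>\<xi>. f \<xi> + a) eta = jump_integral q0 q1 u f eta + a"
proof -
  interpret flip_field: prob_space "flip_field q0 q1" by (rule prob_space_flip_field)
  show ?thesis
    unfolding jump_integral_def using integrable_shift_flip_spins[OF f K eta, of q0 q1 u]
    by (subst Bochner_Integration.integral_add) (auto simp: flip_field.prob_space)
qed

lemma
  assumes f: "f \<in> borel_measurable (Pi0 :: 'd::finite config measure)"
    and K: "\<And>\<xi>. \<xi> \<in> spin_configs \<Longrightarrow> \<bar>f \<xi>\<bar> \<le> K"
    and g: "g \<in> borel_measurable (Pi0 :: 'd::finite config measure)"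
    and K': "\<And>\<xi>. \<xi> \<in> spin_configs \<Longrightarrow> \<bar>g \<xi>\<bar> \<le> K'"
    and eta: "eta \<in> spin_configs"
  shows jump_integral_add:
      "jump_integral q0 q1 u (\<lambda>\<xi>. f \<xi> + g \<xi>) eta = jump_integral q0 q1 u f eta + jump_integral q0 q1 u g eta"
    and jump_integral_diff:
      "jump_integral q0 q1 u (\<lambda>\<xi>. f \<xi> - g \<xi>) eta = jump_integral q0 q1 u f eta - jump_integral q0 q1 u g eta"
  unfolding jump_integral_def
  using integrable_shift_flip_spins[OF f K eta, of q0 q1 u] integrable_shift_flip_spins[OF g K' eta, of q0 q1 u]
  by (simp_all add: Bochner_Integration.integral_add Bochner_Integration.integral_diff)

lemma jump_integral_tendsto:
  fixes U :: "nat \<Rightarrow> 'd::finite config \<Rightarrow> real"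
  assumes U: "\<And>i. U i \<in> borel_measurable Pi0" and u: "u \<in> borel_measurable Pi0"
    and K: "\<And>i \<xi>. \<xi> \<in> spin_configs \<Longrightarrow> \<bar>U i \<xi>\<bar> \<le> K" and lim: "\<And>x. (\<lambda>i. U i x) \<longlonglongrightarrow> u x"
    and eta: "eta \<in> spin_configs"
  shows "(\<lambda>i. jump_integral q0 q1 v (U i) eta) \<longlonglongrightarrow> jump_integral q0 q1 v u eta"
proof -
  interpret flip_field: prob_space "flip_field q0 q1 :: (int^'d \<Rightarrow> bool) measure"
    by (rule prob_space_flip_field)
  show ?thesis
    unfolding jump_integral_def
    by (rule integral_dominated_convergence[where w="\<lambda>_. K"])
      (auto intro!: borel_measurable_comp_shift_flip_spins U u K lim shift_config_in_spin_configs flip_spins_in_spin_configs eta)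
qed

section \<open>Symmetry under spin flip and reflection\<close>

definition reflect :: "'d::finite config \<Rightarrow> 'd config" where
  "reflect eta = (\<lambda>x. - eta (- x))"

lemma measurable_reflect: "reflect \<in> measurable (Pi0 :: 'd::finite config measure) Pi0"
  using measurable_PiM_pmf_reindex[where g="\<lambda>x b. - b" and \<sigma>=uminus]
  unfolding Pi0_def by (simp add: reflect_def[abs_def])

lemma distr_Pi0_reflect: "distr (Pi0 :: 'd::finite config measure) Pi0 reflect = Pi0"
proof -
  have "map_pmf uminus (pmf_of_set {-1::real, 1}) = pmf_of_set {-1, 1}"
    by (subst map_pmf_of_set_inj) (auto simp: inj_on_def insert_commute)
  then show ?thesis
    using distr_PiM_pmf_reindex[OF bij_uminus, where p="\<lambda>_::int^'d. pmf_of_set {-1::real, 1}"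
        and g="\<lambda>_. uminus"]
    by (simp add: Pi0_def reflect_def[abs_def])
qed

lemma integral_Pi0_odd_eq_0:
  fixes G :: "'d::finite config \<Rightarrow> real"
  assumes G: "G \<in> borel_measurable Pi0"
    and odd: "\<And>eta. eta \<in> spin_configs \<Longrightarrow> G (reflect eta) = - G eta"
  shows "(\<integral>eta. G eta \<partial>(Pi0 :: 'd config measure)) = 0"
proof -
  have "(\<integral>eta. G eta \<partial>(Pi0 :: 'd config measure)) = (\<integral>eta. G (reflect eta) \<partial>Pi0)"
    using integral_distr[OF measurable_reflect G] by (simp add: distr_Pi0_reflect)
  also have "\<dots> = (\<integral>eta. - G eta \<partial>Pi0)"
    using AE_spin_configs
    by (intro integral_cong_AE measurable_compose[OF measurable_reflect G] borel_measurable_uminus G)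
      (auto elim: AE_mp simp: odd)
  finally show ?thesis by simp
qed

lemma flip_rate_uminus: "flip_rate q0 q1 (- i) = flip_rate q0 q1 i" by (simp add: flip_rate_def)

lemma measurable_flip_field_reflect:
  "(\<lambda>\<omega> z. \<omega> (- z)) \<in> measurable (flip_field q0 q1 :: (int^'d::finite \<Rightarrow> bool) measure) (flip_field q0 q1)"
  unfolding flip_field_def by (rule measurable_PiM_pmf_reindex[where g="\<lambda>z b. b" and \<sigma>=uminus, simplified])

lemma distr_flip_field_reflect:
  "distr (flip_field q0 q1) (flip_field q0 q1) (\<lambda>\<omega> z. \<omega> (- z)) = (flip_field q0 q1 :: (int^'d::finite \<Rightarrow> bool) measure)"
  using distr_PiM_pmf_reindex[OF bij_uminus, where p="\<lambda>i::int^'d. bernoulli_pmf (flip_rate q0 q1 i)"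
      and g="\<lambda>i b. b"]
  by (simp add: flip_field_def flip_rate_uminus map_pmf_ident)

lemma jump_integral_reflect:
  fixes f :: "'d::finite config \<Rightarrow> real"
  assumes f: "f \<in> borel_measurable Pi0" and par: "\<And>\<xi>. \<xi> \<in> spin_configs \<Longrightarrow> f (reflect \<xi>) = s * f \<xi>"
    and eta: "eta \<in> spin_configs"
  shows "jump_integral q0 q1 u f (reflect eta) = s * jump_integral q0 q1 (- u) f eta"
proof -
  let ?\<omega>' = "\<lambda>\<omega> z. \<omega> (- z)"
  have reflect: "shift_config u (flip_spins (reflect eta) \<omega>) =
      reflect (shift_config (- u) (flip_spins eta (?\<omega>' \<omega>)))" for \<omega>
    by (auto simp: shift_config_def flip_spins_def reflect_def fun_eq_iff add.commute)
  have "jump_integral q0 q1 u f (reflect eta) =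
      (\<integral>\<omega>. s * f (shift_config (- u) (flip_spins eta (?\<omega>' \<omega>))) \<partial>flip_field q0 q1)"
    unfolding jump_integral_def reflect
    by (intro Bochner_Integration.integral_cong[OF refl] par shift_config_in_spin_configs
        flip_spins_in_spin_configs eta)
  also have "\<dots> = s * (\<integral>\<omega>. f (shift_config (- u) (flip_spins eta \<omega>))
      \<partial>distr (flip_field q0 q1) (flip_field q0 q1) ?\<omega>')"
    by (simp add: integral_distr[OF measurable_flip_field_reflect borel_measurable_comp_shift_flip_spins[OF f]])
  also have "\<dots> = s * jump_integral q0 q1 (- u) f eta"
    unfolding distr_flip_field_reflect jump_integral_def ..
  finally show ?thesis .
qed

lemma sum_reindex_uminus:
  fixes F :: "'a::group_add \<Rightarrow> 'b::comm_monoid_add"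
  assumes S: "finite S" and F: "\<And>v. F v \<noteq> 0 \<Longrightarrow> v \<in> S \<and> - v \<in> S"
  shows "(\<Sum>u\<in>S. F (- u)) = (\<Sum>u\<in>S. F u)"
proof -
  have "(\<Sum>u\<in>S. F (- u)) = (\<Sum>v\<in>uminus ` S. F v)"
    by (subst sum.reindex) (auto simp: inj_on_def)
  also have "\<dots> = (\<Sum>v\<in>S \<inter> uminus ` S. F v)"
    using S F by (intro sum.mono_neutral_right) auto
  also have "\<dots> = (\<Sum>v\<in>S. F v)"
    using S F by (intro sum.mono_neutral_left) (auto simp: image_iff, metis minus_minus)
  finally show ?thesis .
qed

lemma Top_reflect:
  fixes f :: "'d::finite config \<Rightarrow> real" and P0 c :: "int^'d \<Rightarrow> real"
  assumes S: "finite S" and P0_supp: "{u. P0 u \<noteq> 0} \<subseteq> S" and c_supp: "{u. c u \<noteq> 0} \<subseteq> S"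
    and P0_even: "\<And>u. P0 (- u) = P0 u" and c_odd: "\<And>u. c (- u) = - c u"
    and f: "f \<in> borel_measurable Pi0" and par: "\<And>\<xi>. \<xi> \<in> spin_configs \<Longrightarrow> f (reflect \<xi>) = s * f \<xi>"
    and eta: "eta \<in> spin_configs"
  shows "Top S P0 c eps q0 q1 f (reflect eta) = s * Top S P0 c eps q0 q1 f eta"
proof -
  define F where "F v = (P0 v + eps * c v * eta 0) * jump_integral q0 q1 v f eta" for v
  have "Top S P0 c eps q0 q1 f (reflect eta) =
      (\<Sum>u\<in>S. (P0 u + eps * c u * reflect eta 0) * jump_integral q0 q1 u f (reflect eta))"
    by (rule Top_eq_jump_integral[OF f])
  also have "\<dots> = (\<Sum>u\<in>S. s * F (- u))"
    by (rule sum.cong[OF refl])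
      (simp only: jump_integral_reflect[OF f par eta], simp add: F_def reflect_def P0_even c_odd algebra_simps)
  also have "\<dots> = s * (\<Sum>u\<in>S. F u)"
  proof -
    have "(\<Sum>u\<in>S. F (- u)) = (\<Sum>u\<in>S. F u)"
    proof (rule sum_reindex_uminus[OF S])
      fix v assume "F v \<noteq> 0"
      then have "P0 v \<noteq> 0 \<or> c v \<noteq> 0" by (auto simp: F_def)
      then show "v \<in> S \<and> - v \<in> S"
        using P0_supp c_supp P0_even c_odd by (metis (mono_tags) mem_Collect_eq subsetD neg_equal_0_iff_equal)
    qed
    then show ?thesis by (simp add: sum_distrib_left[symmetric])
  qed
  also have "\<dots> = s * Top S P0 c eps q0 q1 f eta" by (simp add: Top_eq_jump_integral[OF f] F_def)
  finally show ?thesis .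
qed

section \<open>The environment chain under the standing assumptions\<close>

locale env_chain =
  fixes S :: "(int^'d::finite) set" and P0 c :: "int^'d \<Rightarrow> real"
    and eps q0 q1 M mubar :: real and Pi :: "'d config measure" and rho :: "'d config \<Rightarrow> real"
  assumes S_fin: "finite S" and P0_supp: "{u. P0 u \<noteq> 0} \<subseteq> S" and c_supp: "{u. c u \<noteq> 0} \<subseteq> S"
    and P0_even: "\<And>u. P0 (- u) = P0 u" and c_odd: "\<And>u. c (- u) = - c u"
    and P0_sum: "(\<Sum>u\<in>S. P0 u) = 1"
    and M_ge: "1 \<le> M"
    and T_HM: "\<And>f. f \<in> HM M \<Longrightarrow> Top S P0 c eps q0 q1 f \<in> HM M"
    and rho_meas: "rho \<in> borel_measurable Pi0"
    and Pi_def: "Pi = density Pi0 (\<lambda>eta. ennreal (rho eta))"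
    and Pi_prob: "prob_space Pi"
    and Pi_inv: "\<And>A. A \<in> sets Pi0 \<Longrightarrow> (\<integral>eta. Top S P0 c eps q0 q1 (indicator A) eta \<partial>Pi) = measure Pi A"
    and mubar_range: "0 < mubar \<and> mubar < 1"
    and contraction: "\<And>f. f \<in> HM M \<Longrightarrow> (\<integral>eta. f eta \<partial>Pi) = 0 \<Longrightarrow>
                          normM M (Top S P0 c eps q0 q1 f) \<le> mubar * normM M f"
begin

abbreviation T :: "('d config \<Rightarrow> real) \<Rightarrow> 'd config \<Rightarrow> real" where
  "T \<equiv> Top S P0 c eps q0 q1"

lemma sum_c_eq_0: "(\<Sum>u\<in>S. c u) = 0"
proof -
  have "(\<Sum>u\<in>S. c (- u)) = (\<Sum>u\<in>S. c u)"
  proof (rule sum_reindex_uminus[OF S_fin])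
    fix v assume "c v \<noteq> 0"
    then show "v \<in> S \<and> - v \<in> S"
      using c_supp c_odd by (metis (mono_tags) mem_Collect_eq subsetD neg_equal_0_iff_equal)
  qed
  then show ?thesis by (simp add: c_odd sum_negf)
qed

lemma sum_jump_weights: "(\<Sum>u\<in>S. P0 u + eps * c u * eta 0) = 1"
  by (simp add: sum.distrib P0_sum sum_distrib_right[symmetric] sum_distrib_left[symmetric] sum_c_eq_0)

definition weight_norm :: real where
  "weight_norm = (\<Sum>u\<in>S. \<bar>P0 u\<bar> + \<bar>eps\<bar> * \<bar>c u\<bar>)"

lemma abs_T_le:
  assumes f: "f \<in> borel_measurable Pi0" and K: "\<And>\<xi>. \<xi> \<in> spin_configs \<Longrightarrow> \<bar>f \<xi>\<bar> \<le> K"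
    and eta: "eta \<in> spin_configs"
  shows "\<bar>T f eta\<bar> \<le> weight_norm * K"
proof -
  have "\<bar>T f eta\<bar> \<le> (\<Sum>u\<in>S. \<bar>(P0 u + eps * c u * eta 0) * jump_integral q0 q1 u f eta\<bar>)"
    unfolding Top_eq_jump_integral[OF f] by (rule sum_abs)
  also have "\<dots> \<le> (\<Sum>u\<in>S. (\<bar>P0 u\<bar> + \<bar>eps\<bar> * \<bar>c u\<bar>) * K)"
  proof (rule sum_mono)
    fix u
    have "\<bar>P0 u + eps * c u * eta 0\<bar> \<le> \<bar>P0 u\<bar> + \<bar>eps\<bar> * \<bar>c u\<bar>"
      using spin_configs_abs[OF eta, of 0] by (auto simp: abs_mult intro: order_trans[OF abs_triangle_ineq])
    then show "\<bar>(P0 u + eps * c u * eta 0) * jump_integral q0 q1 u f eta\<bar> \<le> (\<bar>P0 u\<bar> + \<bar>eps\<bar> * \<bar>c u\<bar>) * K"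
      unfolding abs_mult using abs_jump_integral_le[OF f K eta] by (intro mult_mono) auto
  qed
  also have "\<dots> = weight_norm * K" by (simp add: weight_norm_def sum_distrib_right)
  finally show ?thesis .
qed

lemma T_add_const:
  assumes f: "f \<in> borel_measurable Pi0" and K: "\<And>\<xi>. \<xi> \<in> spin_configs \<Longrightarrow> \<bar>f \<xi>\<bar> \<le> K"
    and eta: "eta \<in> spin_configs"
  shows "T (\<lambda>\<xi>. f \<xi> + a) eta = T f eta + a"
proof -
  have fa: "(\<lambda>\<xi>. f \<xi> + a) \<in> borel_measurable Pi0" using f by measurable
  have "T (\<lambda>\<xi>. f \<xi> + a) eta = (\<Sum>u\<in>S. (P0 u + eps * c u * eta 0) * jump_integral q0 q1 u f eta
      + (P0 u + eps * c u * eta 0) * a)"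
    unfolding Top_eq_jump_integral[OF fa]
    by (rule sum.cong[OF refl]) (simp only: jump_integral_add_const[OF f K eta], simp add: algebra_simps)
  also have "\<dots> = T f eta + a"
    by (simp only: sum.distrib sum_distrib_right[symmetric] sum_jump_weights Top_eq_jump_integral[OF f])
      (simp add: P0_sum sum_distrib_left[symmetric] sum_c_eq_0)
  finally show ?thesis .
qed

lemma
  assumes f: "f \<in> borel_measurable Pi0" and K: "\<And>\<xi>. \<xi> \<in> spin_configs \<Longrightarrow> \<bar>f \<xi>\<bar> \<le> K"
    and g: "g \<in> borel_measurable Pi0" and K': "\<And>\<xi>. \<xi> \<in> spin_configs \<Longrightarrow> \<bar>g \<xi>\<bar> \<le> K'"
    and eta: "eta \<in> spin_configs"
  shows T_add: "T (\<lambda>\<xi>. f \<xi> + g \<xi>) eta = T f eta + T g eta"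
    and T_diff: "T (\<lambda>\<xi>. f \<xi> - g \<xi>) eta = T f eta - T g eta"
proof -
  have "(\<lambda>\<xi>. f \<xi> + g \<xi>) \<in> borel_measurable Pi0" "(\<lambda>\<xi>. f \<xi> - g \<xi>) \<in> borel_measurable Pi0"
    using f g by measurable
  then show "T (\<lambda>\<xi>. f \<xi> + g \<xi>) eta = T f eta + T g eta" "T (\<lambda>\<xi>. f \<xi> - g \<xi>) eta = T f eta - T g eta"
    by (simp_all add: Top_eq_jump_integral f g jump_integral_add[OF f K g K' eta]
        jump_integral_diff[OF f K g K' eta] algebra_simps sum.distrib sum_subtractf)
qed

lemma T_cmult: "T (\<lambda>\<xi>. a * f \<xi>) eta = a * T f eta"
  unfolding Top_def by (simp add: sum_distrib_left algebra_simps)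

lemma space_Pi[simp]: "space Pi = UNIV"
  by (simp add: Pi_def)

lemma borel_measurable_Pi: "g \<in> borel_measurable Pi0 \<Longrightarrow> g \<in> borel_measurable Pi"
  by (simp add: Pi_def)

lemma AE_Pi: "AE eta in Pi0. P eta \<Longrightarrow> AE eta in Pi. P eta"
proof -
  assume P: "AE eta in Pi0. P eta"
  have "(\<lambda>eta. ennreal (rho eta)) \<in> borel_measurable Pi0" using rho_meas by measurable
  then show ?thesis unfolding Pi_def by (subst AE_density) (use P in \<open>auto elim: AE_mp\<close>)
qed

lemma AE_spin_configs_Pi: "AE eta in Pi. eta \<in> spin_configs"
  by (rule AE_Pi[OF AE_spin_configs])

lemma integrable_Pi_bounded:
  fixes g :: "'d config \<Rightarrow> real"
  assumes g: "g \<in> borel_measurable Pi0" and K: "\<And>\<xi>. \<xi> \<in> spin_configs \<Longrightarrow> \<bar>g \<xi>\<bar> \<le> K"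
  shows "integrable Pi g"
proof -
  interpret Pi: prob_space Pi by (rule Pi_prob)
  have "AE eta in Pi. norm (g eta) \<le> K"
    using AE_spin_configs_Pi by (rule AE_mp) (auto intro: K)
  then show ?thesis by (intro Pi.integrable_const_bound borel_measurable_Pi g)
qed

lemma integrable_Pi_T:
  fixes f :: "'d config \<Rightarrow> real"
  assumes f: "f \<in> borel_measurable Pi0" and K: "\<And>\<xi>. \<xi> \<in> spin_configs \<Longrightarrow> \<bar>f \<xi>\<bar> \<le> K"
  shows "integrable Pi (T f)"
  by (rule integrable_Pi_bounded[OF borel_measurable_Top[OF f] abs_T_le[OF f K]])

lemma abs_integral_Pi_le_normM:
  assumes f: "f \<in> HM M"
  shows "\<bar>\<integral>eta. f eta \<partial>Pi\<bar> \<le> normM M f"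
proof -
  interpret Pi: prob_space Pi by (rule Pi_prob)
  have ae: "AE eta in Pi. \<bar>f eta\<bar> \<le> normM M f" by (rule AE_Pi[OF AE_abs_le_normM[OF f M_ge]])
  have "integrable Pi f"
    by (rule Pi.integrable_const_bound[where B="normM M f"])
      (use ae borel_measurable_Pi[OF HM_borel_measurable[OF f]] in auto)
  have "\<bar>\<integral>eta. f eta \<partial>Pi\<bar> \<le> (\<integral>eta. \<bar>f eta\<bar> \<partial>Pi)" by (rule integral_abs_bound)
  also have "\<dots> \<le> (\<integral>eta. normM M f \<partial>Pi)"
    using ae \<open>integrable Pi f\<close> by (intro Bochner_Integration.integral_mono_AE) auto
  also have "\<dots> = normM M f" using Pi.prob_space by simp
  finally show ?thesis .
qed

lemma integral_Pi_T_add: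
  assumes f: "f \<in> borel_measurable Pi0" and K: "\<And>\<xi>. \<xi> \<in> spin_configs \<Longrightarrow> \<bar>f \<xi>\<bar> \<le> K"
    and g: "g \<in> borel_measurable Pi0" and K': "\<And>\<xi>. \<xi> \<in> spin_configs \<Longrightarrow> \<bar>g \<xi>\<bar> \<le> K'"
  shows "(\<integral>eta. T (\<lambda>x. f x + g x) eta \<partial>Pi) = (\<integral>eta. T f eta \<partial>Pi) + (\<integral>eta. T g eta \<partial>Pi)"
proof -
  have "(\<integral>eta. T (\<lambda>x. f x + g x) eta \<partial>Pi) = (\<integral>eta. T f eta + T g eta \<partial>Pi)"
  proof (rule integral_cong_AE)
    show "T (\<lambda>x. f x + g x) \<in> borel_measurable Pi" "(\<lambda>eta. T f eta + T g eta) \<in> borel_measurable Pi"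
      using f g by (auto intro!: borel_measurable_Pi borel_measurable_Top borel_measurable_add)
    show "AE eta in Pi. T (\<lambda>x. f x + g x) eta = T f eta + T g eta"
      using AE_spin_configs_Pi by (rule AE_mp) (auto intro!: T_add f g K K')
  qed
  also have "\<dots> = (\<integral>eta. T f eta \<partial>Pi) + (\<integral>eta. T g eta \<partial>Pi)"
    by (rule Bochner_Integration.integral_add) (auto intro!: integrable_Pi_T f g K K')
  finally show ?thesis .
qed

lemma integral_Pi_tendsto:
  fixes U :: "nat \<Rightarrow> 'd config \<Rightarrow> real"
  assumes U: "\<And>i. U i \<in> borel_measurable Pi0" and u: "u \<in> borel_measurable Pi0"
    and K: "\<And>i \<xi>. \<xi> \<in> spin_configs \<Longrightarrow> \<bar>U i \<xi>\<bar> \<le> K"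
    and lim: "\<And>\<xi>. \<xi> \<in> spin_configs \<Longrightarrow> (\<lambda>i. U i \<xi>) \<longlonglongrightarrow> u \<xi>"
  shows "(\<lambda>i. \<integral>eta. U i eta \<partial>Pi) \<longlonglongrightarrow> (\<integral>eta. u eta \<partial>Pi)"
proof (rule integral_dominated_convergence[where w="\<lambda>_. K"])
  interpret Pi: prob_space Pi by (rule Pi_prob)
  show "u \<in> borel_measurable Pi" "\<And>i. U i \<in> borel_measurable Pi"
    using U u by (auto intro: borel_measurable_Pi)
  show "integrable Pi (\<lambda>_. K)" by simp
  show "AE \<xi> in Pi. (\<lambda>i. U i \<xi>) \<longlonglongrightarrow> u \<xi>" "\<And>i. AE \<xi> in Pi. norm (U i \<xi>) \<le> K"
    using AE_spin_configs_Pi by (auto elim!: AE_mp intro: lim K)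
qed

lemma integral_Pi_T_tendsto:
  fixes U :: "nat \<Rightarrow> 'd config \<Rightarrow> real"
  assumes U: "\<And>i. U i \<in> borel_measurable Pi0" and u: "u \<in> borel_measurable Pi0"
    and K: "\<And>i \<xi>. \<xi> \<in> spin_configs \<Longrightarrow> \<bar>U i \<xi>\<bar> \<le> K" and lim: "\<And>x. (\<lambda>i. U i x) \<longlonglongrightarrow> u x"
  shows "(\<lambda>i. \<integral>eta. T (U i) eta \<partial>Pi) \<longlonglongrightarrow> (\<integral>eta. T u eta \<partial>Pi)"
proof (rule integral_Pi_tendsto)
  show "T u \<in> borel_measurable Pi0" "\<And>i. T (U i) \<in> borel_measurable Pi0"
    using U u by (auto intro: borel_measurable_Top)
  show "\<bar>T (U i) \<xi>\<bar> \<le> weight_norm * K" if "\<xi> \<in> spin_configs" for i \<xi>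
    by (rule abs_T_le[OF U K that])
  show "(\<lambda>i. T (U i) \<xi>) \<longlonglongrightarrow> T u \<xi>" if "\<xi> \<in> spin_configs" for \<xi>
    unfolding Top_eq_jump_integral[OF U] Top_eq_jump_integral[OF u]
    by (intro tendsto_sum tendsto_mult tendsto_const jump_integral_tendsto[OF U u K lim that])
qed

text \<open>Invariance of \<open>\<Pi>\<close> is assumed only for indicators; it extends to bounded measurable
  functions by the monotone class argument of \<open>borel_measurable_induct_real\<close>.\<close>

lemma integral_Pi_T_nonneg:
  fixes u :: "'d config \<Rightarrow> real"
  assumes u: "u \<in> borel_measurable Pi0" "\<And>x. 0 \<le> u x" and "\<And>\<xi>. \<xi> \<in> spin_configs \<Longrightarrow> u \<xi> \<le> K"
  shows "(\<integral>eta. T u eta \<partial>Pi) = (\<integral>eta. u eta \<partial>Pi)"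
  using assms
proof (induction arbitrary: K rule: borel_measurable_induct_real)
  case (set A)
  then show ?case using Pi_inv[OF set(1)] prob_space.prob_space[OF Pi_prob] by simp
next
  case (mult u a)
  show ?case
  proof (cases "a = 0")
    case False
    with mult have "\<xi> \<in> spin_configs \<Longrightarrow> u \<xi> \<le> K / a" for \<xi>
      using mult.prems[of \<xi>] by (simp add: field_simps mult.commute)
    then have "(\<integral>eta. T u eta \<partial>Pi) = (\<integral>eta. u eta \<partial>Pi)" by (rule mult.IH)
    then show ?thesis by (simp add: T_cmult)
  qed (use T_cmult[of 0 u] in simp)
next
  case (add u v)
  have Ku: "\<bar>u \<xi>\<bar> \<le> K" and Kv: "\<bar>v \<xi>\<bar> \<le> K" if "\<xi> \<in> spin_configs" for \<xi>
    using add.hyps(2,4)[of \<xi>] add.prems[OF that] by auto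
  have "(\<integral>eta. T (\<lambda>x. v x + u x) eta \<partial>Pi) = (\<integral>eta. T v eta \<partial>Pi) + (\<integral>eta. T u eta \<partial>Pi)"
    by (rule integral_Pi_T_add[OF add.hyps(3) Kv add.hyps(1) Ku])
  also have "\<dots> = (\<integral>eta. v eta \<partial>Pi) + (\<integral>eta. u eta \<partial>Pi)"
  proof -
    have "(\<integral>eta. T u eta \<partial>Pi) = (\<integral>eta. u eta \<partial>Pi)" by (rule add.IH(1)) (use Ku in \<open>blast dest: abs_le_D1\<close>)
    moreover have "(\<integral>eta. T v eta \<partial>Pi) = (\<integral>eta. v eta \<partial>Pi)" by (rule add.IH(2)) (use Kv in \<open>blast dest: abs_le_D1\<close>)
    ultimately show ?thesis by simp
  qed
  also have "\<dots> = (\<integral>eta. v eta + u eta \<partial>Pi)"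
    by (intro Bochner_Integration.integral_add[symmetric] integrable_Pi_bounded[OF _ Kv]
        integrable_Pi_bounded[OF _ Ku] add.hyps)
  finally show ?case .
next
  case (seq U)
  have lim: "(\<lambda>i. U i x) \<longlonglongrightarrow> u x" for x using seq.hyps(4) by simp
  have U_le: "U i x \<le> u x" for i x
    using seq.hyps(3) lim[of x] by (intro incseq_le) (auto simp: incseq_def le_fun_def)
  have K: "\<bar>U i \<xi>\<bar> \<le> K" if "\<xi> \<in> spin_configs" for i \<xi>
    using seq.prems[OF that] seq.hyps(2)[of i \<xi>] U_le[of i \<xi>] by simp
  have "(\<lambda>i. \<integral>eta. U i eta \<partial>Pi) \<longlonglongrightarrow> (\<integral>eta. u eta \<partial>Pi)"
    using integral_Pi_tendsto[OF seq.hyps(1) u(1) K lim] .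
  moreover have "(\<integral>eta. T (U i) eta \<partial>Pi) = (\<integral>eta. U i eta \<partial>Pi)" for i
    by (rule seq.IH) (use K in \<open>blast dest: abs_le_D1\<close>)
  ultimately show ?case
    using LIMSEQ_unique[OF integral_Pi_T_tendsto[OF seq.hyps(1) u(1) K lim]] by simp
qed

lemma integral_Pi_T:
  fixes f :: "'d config \<Rightarrow> real"
  assumes f: "f \<in> borel_measurable Pi0" and K: "\<And>\<xi>. \<xi> \<in> spin_configs \<Longrightarrow> \<bar>f \<xi>\<bar> \<le> K"
  shows "(\<integral>eta. T f eta \<partial>Pi) = (\<integral>eta. f eta \<partial>Pi)"
proof -
  define fp where "fp x = max 0 (f x)" for x
  define fn where "fn x = max 0 (- f x)" for x
  have fp: "fp \<in> borel_measurable Pi0" and fn: "fn \<in> borel_measurable Pi0"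
    unfolding fp_def fn_def using f by measurable
  have Kp: "\<And>\<xi>. \<xi> \<in> spin_configs \<Longrightarrow> \<bar>fp \<xi>\<bar> \<le> K" and Kn: "\<And>\<xi>. \<xi> \<in> spin_configs \<Longrightarrow> \<bar>fn \<xi>\<bar> \<le> K"
    using K by (fastforce simp: fp_def fn_def)+
  have f_eq: "f = (\<lambda>\<xi>. fp \<xi> - fn \<xi>)" by (auto simp: fp_def fn_def fun_eq_iff max_def)
  have "(\<integral>eta. T f eta \<partial>Pi) = (\<integral>eta. T fp eta - T fn eta \<partial>Pi)"
  proof (rule integral_cong_AE)
    show "T f \<in> borel_measurable Pi" "(\<lambda>eta. T fp eta - T fn eta) \<in> borel_measurable Pi"
      using f fp fn by (auto intro!: borel_measurable_diff borel_measurable_Pi borel_measurable_Top)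
    show "AE eta in Pi. T f eta = T fp eta - T fn eta"
      using AE_spin_configs_Pi by (rule AE_mp) (auto simp: T_diff[OF fp Kp fn Kn, symmetric] f_eq[symmetric])
  qed
  also have "\<dots> = (\<integral>eta. T fp eta \<partial>Pi) - (\<integral>eta. T fn eta \<partial>Pi)"
    by (rule Bochner_Integration.integral_diff) (auto intro!: integrable_Pi_T fp fn Kp Kn)
  also have "\<dots> = (\<integral>eta. fp eta \<partial>Pi) - (\<integral>eta. fn eta \<partial>Pi)"
    using integral_Pi_T_nonneg[OF fp, of K] integral_Pi_T_nonneg[OF fn, of K] Kp Kn
    by (auto simp: fp_def fn_def)
  also have "\<dots> = (\<integral>eta. f eta \<partial>Pi)"
    unfolding f_eq by (rule Bochner_Integration.integral_diff[symmetric])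
      (auto intro!: integrable_Pi_bounded fp fn Kp Kn)
  finally show ?thesis .
qed

definition bounded_HM :: "('d config \<Rightarrow> real) \<Rightarrow> bool" where
  "bounded_HM f \<longleftrightarrow> f \<in> HM M \<and> (\<exists>K. \<forall>\<xi>\<in>spin_configs. \<bar>f \<xi>\<bar> \<le> K)"

definition parity :: "real \<Rightarrow> ('d config \<Rightarrow> real) \<Rightarrow> bool" where
  "parity s f \<longleftrightarrow> (\<forall>\<xi>\<in>spin_configs. f (reflect \<xi>) = s * f \<xi>)"

lemma bounded_HM_borel_measurable: "bounded_HM f \<Longrightarrow> f \<in> borel_measurable Pi0"
  unfolding bounded_HM_def using HM_borel_measurable by blast

lemma bounded_HM_T: "bounded_HM f \<Longrightarrow> bounded_HM (T f)"
  unfolding bounded_HM_def using T_HM abs_T_le HM_borel_measurable by metis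

lemma bounded_HM_spin0_mult: "bounded_HM f \<Longrightarrow> bounded_HM (\<lambda>eta. eta 0 * f eta)"
  unfolding bounded_HM_def using HM_spin_mult[OF _ M_ge]
  by (auto simp: abs_mult spin_configs_abs)

lemma bounded_HM_add_const: "bounded_HM f \<Longrightarrow> bounded_HM (\<lambda>eta. f eta + a)"
  unfolding bounded_HM_def using HM_add_const[of f M a] M_ge
  by (auto intro: order_trans[OF abs_triangle_ineq] add_mono)

lemma parity_T: "bounded_HM f \<Longrightarrow> parity s f \<Longrightarrow> parity s (T f)"
  unfolding parity_def
  using Top_reflect[OF S_fin P0_supp c_supp P0_even c_odd bounded_HM_borel_measurable] by blast

lemma parity_spin0_mult: "parity s f \<Longrightarrow> parity (- s) (\<lambda>eta. eta 0 * f eta)"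
  unfolding parity_def by (auto simp: reflect_def)

lemma bounded_HM_integrable_Pi: "bounded_HM f \<Longrightarrow> integrable Pi f"
  unfolding bounded_HM_def using integrable_Pi_bounded HM_borel_measurable by blast

lemma integral_Pi_T_bounded_HM: "bounded_HM f \<Longrightarrow> (\<integral>eta. T f eta \<partial>Pi) = (\<integral>eta. f eta \<partial>Pi)"
  unfolding bounded_HM_def using integral_Pi_T HM_borel_measurable by blast

lemma normM_T_centered_le:
  assumes f: "bounded_HM f" and a: "a = (\<integral>eta. f eta \<partial>Pi)"
  shows "normM M (\<lambda>eta. T f eta - a) \<le> mubar * normM M (\<lambda>eta. f eta - a)"
proof -
  interpret Pi: prob_space Pi by (rule Pi_prob)
  have fa: "(\<lambda>eta. f eta + - a) \<in> HM M"
    using bounded_HM_add_const[OF f, of "- a"] by (simp add: bounded_HM_def)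
  obtain K where K: "\<And>\<xi>. \<xi> \<in> spin_configs \<Longrightarrow> \<bar>f \<xi>\<bar> \<le> K" using f by (auto simp: bounded_HM_def)
  have "(\<integral>eta. f eta + - a \<partial>Pi) = 0"
    using bounded_HM_integrable_Pi[OF f] a Pi.prob_space by simp
  then have "normM M (T (\<lambda>eta. f eta + - a)) \<le> mubar * normM M (\<lambda>eta. f eta + - a)"
    by (rule contraction[OF fa])
  moreover have "T (\<lambda>eta. f eta + - a) eta = T f eta - a" if "eta \<in> spin_configs" for eta
    using T_add_const[OF bounded_HM_borel_measurable[OF f] K that, of "- a"] by simp
  then have "AE eta in Pi0. T (\<lambda>eta. f eta + - a) eta = T f eta - a"
    using AE_spin_configs by (auto elim: AE_mp)
  then have "normM M (\<lambda>eta. T f eta - a) = normM M (T (\<lambda>eta. f eta + - a))"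
    using HM_cong_AE[OF T_HM[OF fa]] borel_measurable_Top[OF bounded_HM_borel_measurable[OF f]] by auto
  ultimately show ?thesis by simp
qed

text \<open>\<open>\<Pi>\<close> is not assumed to be invariant under \<open>reflect\<close>. Instead: the iterates
  \<open>T\<^sup>j f\<close> of an odd \<open>f\<close> stay odd and keep the \<open>\<Pi>\<close>-mean \<open>a\<close> of \<open>f\<close>, while \<open>T\<^sup>j f - a\<close>
  contracts to \<open>0\<close> in \<open>H\<^sub>M\<close>; its empty Walsh coefficient is \<open>-a\<close>, because odd functions have
  \<open>\<Pi>\<^sub>0\<close>-mean zero, so \<open>a = 0\<close>.\<close>

lemma integral_Pi_odd_eq_0:
  assumes f: "bounded_HM f" and odd: "parity (-1) f"
  shows "(\<integral>eta. f eta \<partial>Pi) = 0"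
proof -
  define a where "a = (\<integral>eta. f eta \<partial>Pi)"
  define C where "C = normM M (\<lambda>eta. f eta - a)"
  have iterates: "bounded_HM ((T ^^ j) f) \<and> parity (-1) ((T ^^ j) f) \<and> (\<integral>eta. (T ^^ j) f eta \<partial>Pi) = a \<and>
      normM M (\<lambda>eta. (T ^^ j) f eta - a) \<le> mubar ^ j * C" for j
  proof (induction j)
    case 0 then show ?case using f odd by (simp add: a_def C_def)
  next
    case (Suc j)
    then have "normM M (\<lambda>eta. T ((T ^^ j) f) eta - a) \<le> mubar * normM M (\<lambda>eta. (T ^^ j) f eta - a)"
      by (blast intro: normM_T_centered_le)
    also have "\<dots> \<le> mubar * (mubar ^ j * C)"
      using Suc mubar_range by (intro mult_left_mono) auto
    finally show ?case
      using Suc bounded_HM_T parity_T integral_Pi_T_bounded_HM by (auto simp: algebra_simps)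
  qed
  have "\<bar>a\<bar> \<le> mubar ^ j * C" for j
  proof -
    let ?g = "\<lambda>eta. (T ^^ j) f eta + - a"
    have bounded: "bounded_HM ((T ^^ j) f)" using iterates by blast
    have "(\<integral>eta. (T ^^ j) f eta \<partial>Pi0) = 0"
      using integral_Pi0_odd_eq_0[OF bounded_HM_borel_measurable[OF bounded]] iterates[of j]
      by (auto simp: parity_def)
    then have "walsh_coef ?g {} = - a"
      using walsh_coef_add_const[OF HM_integrable, of "(T ^^ j) f" M "{}" "- a"] bounded
      by (simp add: bounded_HM_def walsh_coef_empty)
    moreover have "\<bar>walsh_coef ?g {}\<bar> * M ^ card ({}::(int^'d) set) \<le> normM M ?g"
      using walsh_coef_le_normM[of ?g M "{}"] bounded_HM_add_const[OF bounded, of "- a"] M_ge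
      by (auto simp: bounded_HM_def)
    ultimately show ?thesis using iterates[of j] by simp
  qed
  moreover have "(\<lambda>j. mubar ^ j * C) \<longlonglongrightarrow> 0 * C"
    by (intro tendsto_mult LIMSEQ_power_zero tendsto_const) (use mubar_range in auto)
  ultimately have "\<bar>a\<bar> \<le> 0" by (intro LIMSEQ_le_const[where X="\<lambda>j. mubar ^ j * C"]) auto
  then show ?thesis by (simp add: a_def)
qed

lemma normM_T_odd_le:
  assumes f: "bounded_HM f" and odd: "parity (-1) f"
  shows "normM M (T f) \<le> mubar * normM M f"
  using contraction[of f] integral_Pi_odd_eq_0[OF f odd] f by (simp add: bounded_HM_def)
end

section \<open>Peeling off the first time\<close>

definition spin_product :: "nat set \<Rightarrow> 'd::finite config list \<Rightarrow> real" where
  "spin_product D xs = (\<Prod>t\<in>D. (xs ! t) 0)"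

definition pred_set :: "nat set \<Rightarrow> nat set" where
  "pred_set D = {t. Suc t \<in> D}"

lemma finite_pred_set: "finite D \<Longrightarrow> finite (pred_set D)"
  unfolding pred_set_def by (rule finite_subset[OF _ finite_imageI[of D "\<lambda>t. t - 1"]]) force

lemma eq_Int_0_Un_Suc_pred_set: "D = (D \<inter> {0}) \<union> Suc ` pred_set D"
  by (auto simp: pred_set_def image_iff) (metis not0_implies_Suc)

lemma spin_product_Cons:
  assumes "finite D"
  shows "spin_product D (eta # xs) = (if 0 \<in> D then eta 0 else 1) * spin_product (pred_set D) xs"
proof -
  have "spin_product D (eta # xs) =
      (\<Prod>t\<in>D \<inter> {0}. ((eta # xs) ! t) 0) * (\<Prod>t\<in>Suc ` pred_set D. ((eta # xs) ! t) 0)"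
    unfolding spin_product_def using assms finite_pred_set[OF assms]
    by (subst eq_Int_0_Un_Suc_pred_set) (rule prod.union_disjoint, auto)
  also have "(\<Prod>t\<in>Suc ` pred_set D. ((eta # xs) ! t) 0) = spin_product (pred_set D) xs"
    unfolding spin_product_def by (subst prod.reindex) auto
  also have "(\<Prod>t\<in>D \<inter> {0}. ((eta # xs) ! t) 0) = (if 0 \<in> D then eta 0 else 1)"
    by (cases "0 \<in> D") (auto simp: Int_absorb1 Int_commute)
  finally show ?thesis by simp
qed

lemma card_pred_set:
  assumes "finite D"
  shows "card D = card (pred_set D) + (if 0 \<in> D then 1 else 0)"
proof -
  have "card D = card (D \<inter> {0}) + card (Suc ` pred_set D)"
    using assms finite_pred_set[OF assms]
    by (subst eq_Int_0_Un_Suc_pred_set) (rule card_Un_disjoint, auto)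
  then show ?thesis by (cases "0 \<in> D") (auto simp: Int_absorb1 Int_commute card_image)
qed

lemma chain_exp_cmult:
  assumes T_cmult: "\<And>f a eta. T (\<lambda>\<xi>. a * f \<xi>) eta = a * T f eta"
  shows "chain_exp T n (\<lambda>xs. a * F xs) eta = a * chain_exp T n F eta"
proof (induction n arbitrary: F eta)
  case (Suc n)
  have "(\<lambda>eta'. chain_exp T n (\<lambda>xs. a * F (eta # xs)) eta') =
      (\<lambda>eta'. a * chain_exp T n (\<lambda>xs. F (eta # xs)) eta')"
    by (rule ext) (rule Suc.IH)
  then show ?case by (simp add: T_cmult)
qed simp

lemma chain_exp_Suc_spin_product:
  assumes D: "finite D" and T_cmult: "\<And>f a eta. T (\<lambda>\<xi>. a * f \<xi>) eta = a * T f eta"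
  shows "chain_exp T (Suc n) (spin_product D) eta =
    (if 0 \<in> D then eta 0 else 1) * T (chain_exp T n (spin_product (pred_set D))) eta"
proof -
  have "(\<lambda>eta'. chain_exp T n (\<lambda>xs. spin_product D (eta # xs)) eta') =
      (\<lambda>eta'. (if 0 \<in> D then eta 0 else 1) * chain_exp T n (spin_product (pred_set D)) eta')"
    by (simp add: spin_product_Cons[OF D] chain_exp_cmult[OF T_cmult])
  then show ?thesis by (simp add: T_cmult)
qed

definition gamma_bound :: "real \<Rightarrow> real \<Rightarrow> nat \<Rightarrow> real" where
  "gamma_bound M mu k = M ^ k * mu ^ (k div 2) * (1 + 2 * mu) ^ ((k - 1) div 2)"

lemma gamma_bound_nonneg: "0 \<le> M \<Longrightarrow> 0 \<le> mu \<Longrightarrow> 0 \<le> gamma_bound M mu k"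
  by (simp add: gamma_bound_def)

lemma gamma_bound_Suc_odd: "odd k \<Longrightarrow> M * mu * gamma_bound M mu k = gamma_bound M mu (Suc k)"
  by (auto elim!: oddE simp: gamma_bound_def algebra_simps)

lemma gamma_bound_Suc_even:
  "even k \<Longrightarrow> k \<ge> 1 \<Longrightarrow> M * (1 + 2 * mu) * gamma_bound M mu k = gamma_bound M mu (Suc k)"
proof -
  assume "even k" "k \<ge> 1"
  then obtain m where "k = 2 * Suc m"
    by (metis evenE not0_implies_Suc mult_0_right not_one_le_zero)
  then have k: "k = 2 * m + 2" by simp
  have "Suc k div 2 = m + 1" "(Suc k - 1) div 2 = m + 1" "k div 2 = m + 1" "(k - 1) div 2 = m"
    using k by auto
  then show ?thesis by (simp add: gamma_bound_def k algebra_simps)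
qed

context env_chain
begin

lemma bounded_HM_one: "bounded_HM (\<lambda>_. 1)" and normM_one_le: "normM M (\<lambda>_::'d config. 1) \<le> 1"
proof -
  have zero: "(\<lambda>_::'d config. 0) \<in> HM M" "normM M (\<lambda>_::'d config. 0) = 0"
    by (simp_all add: HM_def L2Pi0_def normM_def walsh_coef_def)
  then show "bounded_HM (\<lambda>_. 1)"
    using HM_add_const[OF zero(1), of 1] M_ge by (auto simp: bounded_HM_def)
  show "normM M (\<lambda>_::'d config. 1) \<le> 1"
    using HM_add_const[OF zero(1), of 1] M_ge zero(2) by simp
qed

lemma bounded_HM_spin0: "bounded_HM (\<lambda>eta. eta 0)"
  and parity_spin0: "parity (-1) (\<lambda>eta::'d config. eta 0)"
  and normM_spin0_le: "normM M (\<lambda>eta::'d config. eta 0) \<le> M"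
proof -
  show "bounded_HM (\<lambda>eta. eta 0)"
    using bounded_HM_spin0_mult[OF bounded_HM_one] by simp
  show "parity (-1) (\<lambda>eta::'d config. eta 0)" by (simp add: parity_def reflect_def)
  have "normM M (\<lambda>eta::'d config. eta 0 * 1) \<le> M * normM M (\<lambda>_::'d config. 1)"
    using HM_spin_mult[of "\<lambda>_. 1" M] bounded_HM_one M_ge by (auto simp: bounded_HM_def)
  also have "\<dots> \<le> M" using normM_one_le M_ge by (simp add: mult_left_le)
  finally show "normM M (\<lambda>eta::'d config. eta 0) \<le> M" by simp
qed

lemma normM_diff_const_le: "f \<in> HM M \<Longrightarrow> normM M (\<lambda>eta. f eta - a) \<le> normM M f + \<bar>a\<bar>"
  using HM_add_const[of f M "-a"] M_ge by simp

lemma normM_le_diff_const: "f \<in> HM M \<Longrightarrow> normM M f \<le> normM M (\<lambda>eta. f eta - a) + \<bar>a\<bar>"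
  using HM_add_const[of "\<lambda>eta. f eta - a" M a] HM_add_const[of f M "-a"] M_ge by simp

abbreviation bd :: "nat \<Rightarrow> real" where
  "bd k \<equiv> gamma_bound M mubar k"

lemma bd_nonneg: "0 \<le> bd k"
  using gamma_bound_nonneg M_ge mubar_range by auto

text \<open>The invariant of the induction for a function \<open>V\<close> built from \<open>k\<close> spins. The flag \<open>z\<close>
  records that \<open>V\<close> has just been multiplied by \<open>\<eta>(0)\<close>; otherwise \<open>V\<close> is an image under
  \<open>T\<close> and carries the extra contraction information.\<close>

definition chain_bound :: "bool \<Rightarrow> nat \<Rightarrow> ('d config \<Rightarrow> real) \<Rightarrow> bool" where
  "chain_bound z k V \<longleftrightarrow> bounded_HM V \<and> parity ((-1)^k) V \<and> (z \<longrightarrow> normM M V \<le> bd k) \<and>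
     (\<not> z \<and> odd k \<longrightarrow> normM M V \<le> mubar * bd k) \<and>
     (\<not> z \<and> even k \<longrightarrow> \<bar>\<integral>eta. V eta \<partial>Pi\<bar> \<le> bd k \<and>
        normM M (\<lambda>eta. V eta - (\<integral>eta. V eta \<partial>Pi)) \<le> 2 * mubar * bd k)"

lemma chain_bound_T_odd:
  assumes V: "chain_bound z k V" and k: "odd k"
  shows "chain_bound False k (T V) \<and> normM M (T V) \<le> mubar * bd k"
proof -
  have bounded: "bounded_HM V" and odd: "parity (-1) V" using V k by (auto simp: chain_bound_def)
  have "normM M V \<le> bd k"
  proof (cases z)
    case False
    then have "normM M V \<le> mubar * bd k" using V k by (simp add: chain_bound_def)
    also have "\<dots> \<le> bd k" using mubar_range bd_nonneg[of k] by (simp add: mult_left_le_one_le)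
    finally show ?thesis .
  qed (use V in \<open>simp add: chain_bound_def\<close>)
  then have "mubar * normM M V \<le> mubar * bd k"
    using mubar_range by (intro mult_left_mono) auto
  then have "normM M (T V) \<le> mubar * bd k"
    using normM_T_odd_le[OF bounded odd] by simp
  then show ?thesis
    using k bounded_HM_T[OF bounded] parity_T[OF bounded odd] by (simp add: chain_bound_def)
qed

lemma chain_bound_even_mean:
  assumes V: "chain_bound z k V" and k: "even k"
  shows "\<bar>\<integral>eta. V eta \<partial>Pi\<bar> \<le> bd k" and "normM M (\<lambda>eta. V eta - (\<integral>eta. V eta \<partial>Pi)) \<le> 2 * bd k"
proof -
  have HV: "V \<in> HM M" using V by (simp add: chain_bound_def bounded_HM_def)
  have "2 * mubar * bd k \<le> 2 * bd k"
    using mubar_range bd_nonneg[of k] by (simp add: mult_left_le_one_le)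
  show "\<bar>\<integral>eta. V eta \<partial>Pi\<bar> \<le> bd k" and "normM M (\<lambda>eta. V eta - (\<integral>eta. V eta \<partial>Pi)) \<le> 2 * bd k"
  proof (atomize (full), cases z)
    case True
    then show "\<bar>\<integral>eta. V eta \<partial>Pi\<bar> \<le> bd k \<and> normM M (\<lambda>eta. V eta - (\<integral>eta. V eta \<partial>Pi)) \<le> 2 * bd k"
      using V abs_integral_Pi_le_normM[OF HV] normM_diff_const_le[OF HV, of "\<integral>eta. V eta \<partial>Pi"]
      by (simp add: chain_bound_def)
  next
    case False
    then show "\<bar>\<integral>eta. V eta \<partial>Pi\<bar> \<le> bd k \<and> normM M (\<lambda>eta. V eta - (\<integral>eta. V eta \<partial>Pi)) \<le> 2 * bd k"
      using V k \<open>2 * mubar * bd k \<le> 2 * bd k\<close> by (simp add: chain_bound_def)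
  qed
qed

lemma chain_bound_T_even:
  assumes V: "chain_bound z k V" and k: "even k"
  shows "chain_bound False k (T V) \<and> normM M (T V) \<le> (1 + 2 * mubar) * bd k"
proof -
  define a where "a = (\<integral>eta. V eta \<partial>Pi)"
  have bounded: "bounded_HM V" and even: "parity ((-1)^k) V" using V by (auto simp: chain_bound_def)
  have a: "\<bar>a\<bar> \<le> bd k" and V_a: "normM M (\<lambda>eta. V eta - a) \<le> 2 * bd k"
    unfolding a_def by (rule chain_bound_even_mean[OF V k])+
  have "normM M (\<lambda>eta. T V eta - a) \<le> mubar * normM M (\<lambda>eta. V eta - a)"
    by (rule normM_T_centered_le[OF bounded a_def])
  also have "\<dots> \<le> mubar * (2 * bd k)"
    using V_a mubar_range by (intro mult_left_mono) auto
  finally have centered: "normM M (\<lambda>eta. T V eta - a) \<le> 2 * mubar * bd k" by simp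
  have "normM M (T V) \<le> normM M (\<lambda>eta. T V eta - a) + \<bar>a\<bar>"
    using bounded_HM_T[OF bounded] by (intro normM_le_diff_const) (simp add: bounded_HM_def)
  also have "\<dots> \<le> (1 + 2 * mubar) * bd k" using a centered by (simp add: algebra_simps)
  finally show ?thesis
    using k a centered bounded_HM_T[OF bounded] parity_T[OF bounded even]
      integral_Pi_T_bounded_HM[OF bounded]
    by (simp add: chain_bound_def a_def)
qed

lemma chain_bound_T:
  assumes "chain_bound z k V"
  shows "chain_bound False k (T V)"
    and "normM M (T V) \<le> (if odd k then mubar else 1 + 2 * mubar) * bd k"
  using chain_bound_T_odd[OF assms] chain_bound_T_even[OF assms] by (cases "odd k"; simp)+

lemma chain_bound_spin0_mult:
  assumes W: "chain_bound False k W" and k: "1 \<le> k"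
    and norm_W: "normM M W \<le> (if odd k then mubar else 1 + 2 * mubar) * bd k"
  shows "chain_bound True (Suc k) (\<lambda>eta. eta 0 * W eta)"
proof -
  have bounded: "bounded_HM W" and par: "parity ((-1) ^ k) W"
    using W by (auto simp: chain_bound_def)
  have "normM M (\<lambda>eta. eta 0 * W eta) \<le> M * normM M W"
    using HM_spin_mult[of W M] bounded M_ge by (auto simp: bounded_HM_def)
  also have "\<dots> \<le> M * ((if odd k then mubar else 1 + 2 * mubar) * bd k)"
    using norm_W M_ge by (intro mult_left_mono) auto
  also have "\<dots> = bd (Suc k)"
    using gamma_bound_Suc_odd gamma_bound_Suc_even k by (auto simp: algebra_simps)
  finally show ?thesis
    using bounded_HM_spin0_mult[OF bounded] parity_spin0_mult[OF par] by (simp add: chain_bound_def)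
qed

lemma chain_bound_spin_product:
  "finite D \<Longrightarrow> D \<subseteq> {0..n} \<Longrightarrow> n \<in> D \<Longrightarrow> chain_bound (0 \<in> D) (card D) (chain_exp T n (spin_product D))"
proof (induction n arbitrary: D)
  case 0
  then have "D = {0}" by auto
  moreover have "chain_exp T 0 (spin_product {0}) = (\<lambda>eta. eta 0)"
    by (rule ext) (simp add: spin_product_def)
  ultimately show ?case
    using bounded_HM_spin0 parity_spin0 normM_spin0_le by (simp add: chain_bound_def gamma_bound_def)
next
  case (Suc n)
  define V where "V = chain_exp T n (spin_product (pred_set D))"
  have fin: "finite (pred_set D)" by (rule finite_pred_set[OF Suc.prems(1)])
  have n: "n \<in> pred_set D" using Suc.prems(3) by (simp add: pred_set_def)
  have V: "chain_bound (0 \<in> pred_set D) (card (pred_set D)) V"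
    unfolding V_def using Suc.prems(2) by (intro Suc.IH[OF fin _ n]) (auto simp: pred_set_def)
  have k: "1 \<le> card (pred_set D)" using fin n by (metis One_nat_def Suc_leI card_gt_0_iff empty_iff)
  have "chain_exp T (Suc n) (spin_product D) = (\<lambda>eta. (if 0 \<in> D then eta 0 else 1) * T V eta)"
    unfolding V_def by (rule ext) (rule chain_exp_Suc_spin_product[OF Suc.prems(1) T_cmult])
  then show ?case
    using card_pred_set[OF Suc.prems(1)] chain_bound_T[OF V] chain_bound_spin0_mult[OF _ k]
    by (cases "0 \<in> D") simp_all
qed

lemma G_gamma_bound:
  assumes fin: "finite gam" and ne: "gam \<noteq> {}"
  shows "G_gamma T gam \<in> HM M \<and> normM M (G_gamma T gam) \<le> bd (card gam)"
proof -
  define m where "m = Min gam"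
  define n where "n = Max gam - m"
  define D where "D = (\<lambda>t. t - m) ` gam"
  have inj: "inj_on (\<lambda>t. t - m) gam"
    using fin by (intro inj_onI) (metis Min_le add_diff_inverse_nat m_def not_less)
  have spins: "(\<lambda>xs. \<Prod>t\<in>gam. (xs ! (t - m)) 0) = spin_product D"
    by (rule ext) (simp add: spin_product_def D_def prod.reindex[OF inj])
  have G: "G_gamma T gam = chain_exp T n (spin_product D)"
    by (rule ext) (simp only: G_gamma_def m_def[symmetric] n_def[symmetric] spins)
  have "finite D" "D \<subseteq> {0..n}" "n \<in> D" "0 \<in> D"
    using fin ne by (auto simp: D_def n_def m_def intro!: diff_le_mono Max_ge image_eqI[where x="Min gam"] Min_in)
  then have "chain_bound True (card D) (G_gamma T gam)"
    using chain_bound_spin_product[of D n] by (simp add: G)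
  moreover have "card D = card gam" unfolding D_def by (rule card_image[OF inj])
  ultimately show ?thesis by (auto simp: chain_bound_def bounded_HM_def)
qed

end

lemma pow_div2_le_sqrt_pow:
  fixes x r :: real and k :: nat
  assumes x: "0 < x" "x \<le> 1" and r: "1 \<le> r"
  shows "x ^ (k div 2) * r ^ ((k - 1) div 2) \<le> (1 / sqrt x) * (sqrt x ^ k * sqrt r ^ k)"
proof (cases "even k")
  case True
  then obtain m where k: "k = 2 * m" by (auto elim: evenE)
  have "x ^ (k div 2) * r ^ ((k - 1) div 2) = x ^ m * r ^ ((2 * m - 1) div 2)" by (simp add: k)
  also have "\<dots> \<le> x ^ m * r ^ m"
    using x r by (intro mult_left_mono power_increasing) auto
  also have "\<dots> \<le> (1 / sqrt x) * (x ^ m * r ^ m)"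
  proof -
    have "1 \<le> 1 / sqrt x" using x by (simp add: field_simps)
    moreover have "0 \<le> x ^ m * r ^ m" using x r by simp
    ultimately show ?thesis using mult_right_mono[of 1 "1 / sqrt x" "x ^ m * r ^ m"] by simp
  qed
  finally show ?thesis using x r by (simp add: k power_mult real_sqrt_pow2)
next
  case False
  then obtain m where k: "k = 2 * m + 1" by (auto elim: oddE)
  have "x ^ (k div 2) * r ^ ((k - 1) div 2) = x ^ m * r ^ m * 1" by (simp add: k)
  also have "\<dots> \<le> x ^ m * r ^ m * sqrt r"
    using x r by (intro mult_left_mono) auto
  also have "\<dots> = (1 / sqrt x) * (sqrt x ^ k * sqrt r ^ k)"
  proof -
    have "sqrt x ^ k = x ^ m * sqrt x" "sqrt r ^ k = r ^ m * sqrt r"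
      using x r by (simp_all add: k power_add power_mult real_sqrt_pow2)
    then show ?thesis using x by (simp add: field_simps)
  qed
  finally show ?thesis .
qed

lemma gamma_bound_le_geometric:
  fixes M mu :: real
  assumes M: "1 \<le> M" and mu: "0 < mu" "mu < 1"
  shows "gamma_bound M mu k \<le> (1 / sqrt mu) * (M * sqrt (mu * (1 + 2 * mu))) ^ k"
proof -
  have "gamma_bound M mu k \<le> M ^ k * ((1 / sqrt mu) * (sqrt mu ^ k * sqrt (1 + 2 * mu) ^ k))"
    unfolding gamma_bound_def mult.assoc using M mu by (intro mult_left_mono pow_div2_le_sqrt_pow) auto
  also have "\<dots> = (1 / sqrt mu) * (M * sqrt (mu * (1 + 2 * mu))) ^ k"
    by (simp add: real_sqrt_mult power_mult_distrib)
  finally show ?thesis .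
qed

text \<open>Besides the symmetry of \<open>P0\<close> and \<open>c\<close>, only the standing assumptions enter the proof; the
  remaining hypotheses are those under which the standing assumptions hold.\<close>

theorem mainTheorem1:
  fixes P0 c :: "(int ^ 'd::finite) \<Rightarrow> real"
    and S :: "(int ^ 'd) set"
    and eps q0 q1 M mubar :: real
    and Pi :: "'d config measure"
    and rho :: "'d config \<Rightarrow> real"
  defines "T \<equiv> Top S P0 c eps q0 q1"
  assumes eps_pos: "eps > 0"
    and P0_nonneg: "\<And>u. P0 u \<ge> 0"
    and P0_even: "\<And>u. P0 (- u) = P0 u"
    and S_fin: "finite S"
    and P0_supp: "{u. P0 u \<noteq> 0} \<subseteq> S"
    and P0_sum: "(\<Sum>u\<in>S. P0 u) = 1"
    and P0_aperiodic: "\<And>l. (\<forall>i. - pi < l $ i \<and> l $ i \<le> pi) \<Longrightarrow>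
                          (cmod (p_tilde P0 l) = 1 \<longleftrightarrow> l = 0)"
    and P0_wiener: "(\<lambda>x. cmod (inv_p_fourier P0 x)) summable_on UNIV"
    and c_odd: "\<And>u. c (- u) = - c u"
    and c_supp: "{u. c u \<noteq> 0} \<subseteq> S"
    and jump_prob: "\<And>u. 0 \<le> P0 u - eps * c u \<and> P0 u - eps * c u < 1
                         \<and> 0 \<le> P0 u + eps * c u \<and> P0 u + eps * c u < 1"
    (* Q0, Q1 symmetric stochastic 2x2 matrices; Q0 has eigenvalue mu = 1 - 2 q0, 0 < |mu| < 1 *)
    and q0_range: "0 < q0 \<and> q0 < 1 \<and> q0 \<noteq> 1/2"
    and q1_range: "0 \<le> q1 \<and> q1 \<le> 1"
    and M_gt: "M > 1"
    and T_HM: "\<And>f. f \<in> HM M \<Longrightarrow> T f \<in> HM M"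
    and rho_meas: "rho \<in> borel_measurable Pi0"
    and rho_bdd: "\<exists>B. \<forall>eta. 0 \<le> rho eta \<and> rho eta \<le> B"
    and Pi_def: "Pi = density Pi0 (\<lambda>eta. ennreal (rho eta))"
    and Pi_prob: "prob_space Pi"
    and Pi_inv: "\<And>A. A \<in> sets Pi0 \<Longrightarrow> (\<integral>eta. T (indicator A) eta \<partial>Pi) = measure Pi A"
    and mubar_range: "0 < mubar \<and> mubar < 1"
    and contraction: "\<And>f. f \<in> HM M \<Longrightarrow> (\<integral>eta. f eta \<partial>Pi) = 0 \<Longrightarrow>
                          normM M (T f) \<le> mubar * normM M f"
  shows "\<exists>C > 0. \<forall>gam :: nat set. finite gam \<and> gam \<noteq> {} \<longrightarrow>
           G_gamma T gam \<in> HM M \<and>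
           normM M (G_gamma T gam)
             \<le> M ^ card gam * mubar ^ (card gam div 2) * (1 + 2 * mubar) ^ ((card gam - 1) div 2) \<and>
           M ^ card gam * mubar ^ (card gam div 2) * (1 + 2 * mubar) ^ ((card gam - 1) div 2)
             \<le> C * (M * sqrt (mubar * (1 + 2 * mubar))) ^ card gam"
proof -
  interpret env_chain S P0 c eps q0 q1 M mubar Pi rho
    using S_fin P0_supp c_supp P0_even c_odd P0_sum less_imp_le[OF M_gt] T_HM[unfolded T_def] rho_meas
      Pi_def Pi_prob Pi_inv[unfolded T_def] mubar_range contraction[unfolded T_def]
    by (rule env_chain.intro)
  show ?thesis
  proof (intro exI[of _ "1 / sqrt mubar"] conjI allI impI)
    show "1 / sqrt mubar > 0" using mubar_range by simp
    fix gam :: "nat set" assume "finite gam \<and> gam \<noteq> {}"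
    then show "G_gamma T gam \<in> HM M"
      and "normM M (G_gamma T gam) \<le> M ^ card gam * mubar ^ (card gam div 2) * (1 + 2 * mubar) ^ ((card gam - 1) div 2)"
      using G_gamma_bound unfolding T_def gamma_bound_def by blast+
    show "M ^ card gam * mubar ^ (card gam div 2) * (1 + 2 * mubar) ^ ((card gam - 1) div 2)
        \<le> 1 / sqrt mubar * (M * sqrt (mubar * (1 + 2 * mubar))) ^ card gam"
      using gamma_bound_le_geometric[of M mubar "card gam"] M_gt mubar_range by (simp add: gamma_bound_def)
  qed
qed

end
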